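(* Consider Bernoulli bond percolation on a transitive weighted graph at parameter $\beta>0$, and let $K$ denote the cluster of a fixed vertex. For each integer $p\ge2$, \[\mathbb E_\beta|K|^p\le(2p-3)!!\,(\mathbb E_\beta|K|^2)^k(\mathbb E_\beta|K|)^{2p-1-3k}\] for every integer $0\le k\le\lceil\frac{p-1}{2}\rceil$.
   Context: A weighted graph $G=(V,E,J)$ has edge weights $J:E\to[0,\infty)$; Bernoulli bond percolation at parameter $\beta$ declares each edge $e$ open independently with probability $1-e^{-\beta J(e)}$, with law $\mathbb{P}_\beta$ and expectation $\mathbb E_\beta$. Transitive means the automorphism group (preserving weights) acts transitively on vertices, so the law of $|K_v|$ does not depend on $v$. $(2p-3)!!$ is the product of odd integers up to $2p-3$. *)

theory Defs
  imports "HOL-Probability.Probability"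
begin

text \<open>Edges are the two-element sets {x,y}; a pair of weight 0
  is never open, so it is equivalent to the absence of an edge.\<close>

definition weighted_graph :: "('v \<Rightarrow> 'v \<Rightarrow> real) \<Rightarrow> bool" where
  "weighted_graph J \<longleftrightarrow> (\<forall>x y. J x y \<ge> 0 \<and> J x y = J y x)"

definition edges :: "'v set set" where
  "edges = {e. \<exists>x y. x \<noteq> y \<and> e = {x, y}}"

definition edge_weight :: "('v \<Rightarrow> 'v \<Rightarrow> real) \<Rightarrow> 'v set \<Rightarrow> real" where
  "edge_weight J e = (THE w. \<exists>x y. x \<noteq> y \<and> e = {x, y} \<and> w = J x y)"

definition transitive_wgraph :: "('v \<Rightarrow> 'v \<Rightarrow> real) \<Rightarrow> bool" where
  "transitive_wgraph J \<longleftrightarrow>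
     (\<forall>x y. \<exists>\<phi>. bij \<phi> \<and> (\<forall>a b. J (\<phi> a) (\<phi> b) = J a b) \<and> \<phi> x = y)"

definition perc :: "real \<Rightarrow> ('v \<Rightarrow> 'v \<Rightarrow> real) \<Rightarrow> ('v set \<Rightarrow> bool) measure" where
  "perc \<beta> J = (\<Pi>\<^sub>M e\<in>edges. measure_pmf (bernoulli_pmf (1 - exp (- \<beta> * edge_weight J e))))"

definition open_edge :: "('v set \<Rightarrow> bool) \<Rightarrow> 'v \<Rightarrow> 'v \<Rightarrow> bool" where
  "open_edge \<omega> x y \<longleftrightarrow> x \<noteq> y \<and> \<omega> {x, y}"

definition cluster :: "('v set \<Rightarrow> bool) \<Rightarrow> 'v \<Rightarrow> 'v set" where
  "cluster \<omega> v = {w. (open_edge \<omega>)\<^sup>*\<^sup>* v w}"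

definition cluster_size :: "('v set \<Rightarrow> bool) \<Rightarrow> 'v \<Rightarrow> ennreal" where
  "cluster_size \<omega> v = (if finite (cluster \<omega> v) then ennreal (real (card (cluster \<omega> v))) else \<infinity>)"

text \<open>(2p-3)!! = 1 * 3 * ... * (2p-3) for p \<ge> 2.\<close>
definition odd_dfact :: "nat \<Rightarrow> nat" where
  "odd_dfact p = (\<Prod>i<p - 1. 2 * i + 1)"

end

theory Submission
  imports Defs
begin

text \<open>Writing \<open>|K|^p\<close> as the number of \<open>p\<close>-tuples of vertices connected
  to \<open>v\<close>, the open edges connecting such a tuple contain a tree. Cutting it at its first branch
  point \<open>u\<close> splits the tuple into two nonempty groups, and the path from \<open>v\<close> to \<open>u\<close> and the two
  subtrees are edge-disjoint, so the BK inequality factorises the probability. Either the path is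
  paid for by a factor \<open>E|K|\<close>, or one descends to the branch points \<open>a\<close>, \<open>b\<close> of the two subtrees
  and pays for the connections of \<open>v\<close> to both of them by \<open>E|K|^2\<close>. Induction on \<open>p\<close> gives the
  bound, the splits being counted by \<open>(2p-3)!!\<close> through the convolution identity for the
  coefficients of \<open>sqrt (1 - 2x)\<close>. All this is done for finitely many edges, where probabilities
  are finite sums; monotone convergence transfers it to the infinite graph, and transitivity
  bounds the moments of every vertex by those of \<open>v\<close>.\<close>

section \<open>Double factorials\<close>

lemma odd_dfact_Suc_Suc: "odd_dfact (Suc (Suc n)) = odd_dfact (Suc n) * (2 * n + 1)"
  by (simp add: odd_dfact_def)

definition odd_prod :: "nat \<Rightarrow> real" where
  "odd_prod n = (\<Prod>i<n. 2 * real i - 1)"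

lemma odd_prod_Suc: "odd_prod (Suc n) = - real (odd_dfact (Suc n))"
proof (induction n)
  case (Suc n)
  have "odd_prod (Suc (Suc n)) = odd_prod (Suc n) * (2 * real n + 1)"
    by (simp add: odd_prod_def)
  then show ?case
    using Suc by (simp add: odd_dfact_Suc_Suc algebra_simps)
qed (simp add: odd_prod_def odd_dfact_def)

lemma odd_prod_eq_odd_dfact: "n \<ge> 1 \<Longrightarrow> odd_prod n = - real (odd_dfact n)"
  using odd_prod_Suc[of "n - 1"] by simp

lemma odd_prod_gbinomial: "odd_prod n = ((1/2) gchoose n) * (-2) ^ n * fact n"
proof -
  have "((1/2::real) gchoose n) * (-2) ^ n * fact n = (-2) ^ n * (\<Prod>i = 0..<n. 1/2 - real i)"
    using gbinomial_mult_fact[of n "1/2::real"] by (simp add: mult_ac)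
  also have "\<dots> = (\<Prod>i<n. -2 * (1/2 - real i))"
    by (simp only: prod.distrib atLeast0LessThan prod_constant card_lessThan)
  also have "\<dots> = odd_prod n"
    unfolding odd_prod_def by (intro prod.cong) (auto simp: algebra_simps)
  finally show ?thesis ..
qed

text \<open>The exponential generating function of \<^const>\<open>odd_prod\<close> is \<open>sqrt (1 - 2 x)\<close>;
  its square \<open>1 - 2 x\<close> has no coefficients beyond degree one. Coefficientwise this is
  Vandermonde's identity for \<open>1/2 + 1/2 = 1\<close>.\<close>
lemma odd_prod_convolution:
  assumes "n \<ge> 2"
  shows "(\<Sum>k=0..n. real (n choose k) * odd_prod k * odd_prod (n - k)) = 0"
proof -
  have "(1::real) gchoose n = 0"
    using binomial_gbinomial[of 1 n, where 'a=real] assms by (simp add: binomial_eq_0)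
  then have vandermonde: "(\<Sum>k=0..n. ((1/2::real) gchoose k) * ((1/2) gchoose (n - k))) = 0"
    using gbinomial_Vandermonde[of "1/2::real" "1/2" n] by simp
  have "fact n * (-2) ^ n * (((1/2::real) gchoose k) * ((1/2) gchoose (n - k)))
      = real (n choose k) * odd_prod k * odd_prod (n - k)" if "k \<in> {0..n}" for k
  proof -
    have "real (fact k * fact (n - k) * (n choose k)) = real (fact n)"
      using that by (subst binomial_fact_lemma) auto
    then have "(fact n :: real) = real (n choose k) * fact k * fact (n - k)"
      by (simp add: algebra_simps)
    moreover have "(-2::real) ^ n = (-2) ^ k * (-2) ^ (n - k)"
      using that by (simp flip: power_add)
    ultimately show ?thesis
      unfolding odd_prod_gbinomial by (simp add: algebra_simps)
  qed
  then have "(\<Sum>k=0..n. real (n choose k) * odd_prod k * odd_prod (n - k))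
      = fact n * (-2) ^ n * (\<Sum>k=0..n. ((1/2) gchoose k) * ((1/2) gchoose (n - k)))"
    unfolding sum_distrib_left by (intro sum.cong refl) simp
  then show ?thesis
    using vandermonde by simp
qed

lemma odd_dfact_convolution:
  assumes "n \<ge> 2"
  shows "(\<Sum>k=1..n-1. (n choose k) * odd_dfact k * odd_dfact (n - k)) = 2 * odd_dfact n"
proof -
  have ends: "{0..n} = insert 0 (insert n {1..n-1})"
    using assms by auto
  have "(\<Sum>k=1..n-1. real (n choose k) * odd_prod k * odd_prod (n - k))
      = (\<Sum>k=1..n-1. real ((n choose k) * odd_dfact k * odd_dfact (n - k)))"
    by (intro sum.cong refl) (auto simp: odd_prod_eq_odd_dfact)
  moreover have "odd_prod n = - real (odd_dfact n)"
    using assms by (simp add: odd_prod_eq_odd_dfact)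
  moreover have "odd_prod 0 = 1"
    by (simp add: odd_prod_def)
  ultimately have "real (\<Sum>k=1..n-1. (n choose k) * odd_dfact k * odd_dfact (n - k))
      = real (2 * odd_dfact n)"
    using odd_prod_convolution[OF assms] assms unfolding ends by simp
  then show ?thesis
    by (simp only: of_nat_eq_iff)
qed

lemma odd_dfact_convolution_first:
  assumes "n \<ge> 2"
  shows "(\<Sum>k=1..n-1. ((n - 1) choose (k - 1)) * odd_dfact k * odd_dfact (n - k)) = odd_dfact n"
proof -
  define h where "h k = odd_dfact k * odd_dfact (n - k)" for k
  have pascal: "n choose k = ((n - 1) choose (k - 1)) + ((n - 1) choose k)" if "1 \<le> k" for k
    using that assms by (cases n; cases k) auto
  have "(\<Sum>k=1..n-1. ((n - 1) choose k) * h k) = (\<Sum>k=1..n-1. ((n - 1) choose (k - 1)) * h k)"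
  proof (rule sum.reindex_bij_witness[of _ "\<lambda>k. n - k" "\<lambda>k. n - k"])
    fix k assume "k \<in> {1..n-1}"
    then show "((n - 1) choose (n - k - 1)) * h (n - k) = ((n - 1) choose k) * h k"
      using binomial_symmetric[of k "n - 1"] by (auto simp: h_def diff_diff_add)
  qed auto
  moreover have "(\<Sum>k=1..n-1. (n choose k) * h k)
      = (\<Sum>k=1..n-1. ((n - 1) choose (k - 1)) * h k) + (\<Sum>k=1..n-1. ((n - 1) choose k) * h k)"
    by (simp add: pascal algebra_simps flip: sum.distrib)
  ultimately show ?thesis
    using odd_dfact_convolution[OF assms] unfolding h_def by (simp add: mult.assoc)
qed

section \<open>Bernoulli percolation on finitely many edges\<close>

definition bern_params :: "('e \<Rightarrow> real) \<Rightarrow> 'e set \<Rightarrow> bool" where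
  "bern_params q F \<longleftrightarrow> (\<forall>e\<in>F. 0 \<le> q e \<and> q e \<le> 1)"

definition bern_weight :: "('e \<Rightarrow> real) \<Rightarrow> 'e set \<Rightarrow> 'e set \<Rightarrow> real" where
  "bern_weight q F S = (\<Prod>e\<in>S. q e) * (\<Prod>e\<in>F - S. 1 - q e)"

definition bern_expect :: "('e \<Rightarrow> real) \<Rightarrow> 'e set \<Rightarrow> ('e set \<Rightarrow> real) \<Rightarrow> real" where
  "bern_expect q F f = (\<Sum>S\<in>Pow F. bern_weight q F S * f S)"

definition bern_prob :: "('e \<Rightarrow> real) \<Rightarrow> 'e set \<Rightarrow> ('e set \<Rightarrow> bool) \<Rightarrow> real" where
  "bern_prob q F A = bern_expect q F (\<lambda>S. of_bool (A S))"

lemma bern_weight_nonneg: "bern_params q F \<Longrightarrow> S \<subseteq> F \<Longrightarrow> 0 \<le> bern_weight q F S"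
  unfolding bern_weight_def bern_params_def by (intro mult_nonneg_nonneg prod_nonneg) auto

lemma bern_expect_insert:
  assumes "finite F" "e \<notin> F"
  shows "bern_expect q (insert e F) f
    = bern_expect q F (\<lambda>T. q e * f (insert e T) + (1 - q e) * f T)"
proof -
  have inj: "inj_on (insert e) (Pow F)"
    using assms unfolding inj_on_def by (metis PowD insert_absorb insert_ident subsetD)
  have closed: "bern_weight q (insert e F) S = (1 - q e) * bern_weight q F S"
    if "S \<subseteq> F" for S
  proof -
    have "insert e F - S = insert e (F - S)"
      using assms that by auto
    then show ?thesis
      using assms that unfolding bern_weight_def by (simp add: algebra_simps)
  qed
  have opened: "bern_weight q (insert e F) (insert e S) = q e * bern_weight q F S"
    if "S \<subseteq> F" for S
  proof -
    have "insert e F - insert e S = F - S" "e \<notin> S" "finite S"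
      using assms that finite_subset by auto
    then show ?thesis
      unfolding bern_weight_def by (simp add: algebra_simps)
  qed
  have "bern_expect q (insert e F) f = (\<Sum>S\<in>Pow F. bern_weight q (insert e F) S * f S)
      + (\<Sum>S\<in>insert e ` Pow F. bern_weight q (insert e F) S * f S)"
    unfolding bern_expect_def Pow_insert using assms
    by (intro sum.union_disjoint) auto
  also have "\<dots> = (\<Sum>T\<in>Pow F. (1 - q e) * bern_weight q F T * f T)
      + (\<Sum>T\<in>Pow F. q e * bern_weight q F T * f (insert e T))"
    by (simp add: sum.reindex[OF inj] closed opened)
  finally show ?thesis
    unfolding bern_expect_def by (simp add: algebra_simps flip: sum.distrib)
qed

lemma bern_expect_add: "bern_expect q F (\<lambda>S. f S + g S) = bern_expect q F f + bern_expect q F g"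
  by (simp add: bern_expect_def algebra_simps sum.distrib)

lemma bern_expect_cmult: "bern_expect q F (\<lambda>S. c * f S) = c * bern_expect q F f"
  unfolding bern_expect_def sum_distrib_left by (simp add: ac_simps)

lemma bern_expect_multc: "bern_expect q F (\<lambda>S. f S * c) = bern_expect q F f * c"
  unfolding bern_expect_def sum_distrib_right by (simp add: ac_simps)

lemma bern_expect_sum:
  "bern_expect q F (\<lambda>S. \<Sum>i\<in>I. f i S) = (\<Sum>i\<in>I. bern_expect q F (f i))"
  by (simp add: bern_expect_def sum_distrib_left sum.swap[of _ I])

lemma bern_expect_mono:
  assumes "bern_params q F" "\<And>S. S \<subseteq> F \<Longrightarrow> f S \<le> g S"
  shows "bern_expect q F f \<le> bern_expect q F g"
  unfolding bern_expect_def using assms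
  by (intro sum_mono mult_left_mono) (auto intro: bern_weight_nonneg)

lemma bern_expect_const: "finite F \<Longrightarrow> bern_expect q F (\<lambda>_. c) = c"
proof (induction F rule: finite_induct)
  case empty
  then show ?case by (simp add: bern_expect_def bern_weight_def)
next
  case (insert e F)
  then show ?case by (simp add: bern_expect_insert algebra_simps)
qed

lemma bern_prob_nonneg: "bern_params q F \<Longrightarrow> 0 \<le> bern_prob q F A"
  unfolding bern_prob_def bern_expect_def
  by (intro sum_nonneg mult_nonneg_nonneg bern_weight_nonneg) auto

lemma bern_prob_mono:
  assumes "bern_params q F" "\<And>S. S \<subseteq> F \<Longrightarrow> A S \<Longrightarrow> B S"
  shows "bern_prob q F A \<le> bern_prob q F B"
  unfolding bern_prob_def using assms by (intro bern_expect_mono) auto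

lemma bern_prob_Union_le:
  assumes "bern_params q F" "finite I"
  shows "bern_prob q F (\<lambda>S. \<exists>i\<in>I. A i S) \<le> (\<Sum>i\<in>I. bern_prob q F (A i))"
proof -
  have "of_bool (\<exists>i\<in>I. A i S) \<le> (\<Sum>i\<in>I. of_bool (A i S) :: real)" for S
  proof (cases "\<exists>i\<in>I. A i S")
    case True
    then obtain i where "i \<in> I" "A i S" by blast
    then have "of_bool (A i S) \<le> (\<Sum>i\<in>I. of_bool (A i S) :: real)"
      using assms(2) by (intro member_le_sum) auto
    with \<open>A i S\<close> show ?thesis by simp
  qed (simp add: sum_nonneg)
  then have "bern_prob q F (\<lambda>S. \<exists>i\<in>I. A i S)
      \<le> bern_expect q F (\<lambda>S. \<Sum>i\<in>I. of_bool (A i S))"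
    unfolding bern_prob_def by (intro bern_expect_mono[OF assms(1)])
  then show ?thesis
    by (simp add: bern_expect_sum bern_prob_def)
qed

section \<open>The BK inequality\<close>

definition increasing_event :: "('e set \<Rightarrow> bool) \<Rightarrow> bool" where
  "increasing_event A \<longleftrightarrow> (\<forall>S T. A S \<longrightarrow> S \<subseteq> T \<longrightarrow> A T)"

definition disj_occ_in :: "('e set \<Rightarrow> bool) \<Rightarrow> ('e set \<Rightarrow> bool) \<Rightarrow> 'e set \<Rightarrow> 'e set \<Rightarrow> bool" where
  "disj_occ_in A B X Y \<longleftrightarrow> (\<exists>S1 S2. S1 \<subseteq> X \<and> S2 \<subseteq> Y \<and> S1 \<inter> S2 = {} \<and> A S1 \<and> B S2)"

definition disj_occ :: "('e set \<Rightarrow> bool) \<Rightarrow> ('e set \<Rightarrow> bool) \<Rightarrow> 'e set \<Rightarrow> bool" where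
  "disj_occ A B S \<longleftrightarrow> disj_occ_in A B S S"

lemma increasing_eventD: "increasing_event A \<Longrightarrow> A S \<Longrightarrow> S \<subseteq> T \<Longrightarrow> A T"
  unfolding increasing_event_def by blast

lemma increasing_event_disj_occ: "increasing_event (disj_occ A B)"
  unfolding increasing_event_def disj_occ_def disj_occ_in_def by (meson order_trans)

lemma disj_occ_in_mono:
  "disj_occ_in A B X Y \<Longrightarrow> X \<subseteq> X' \<Longrightarrow> Y \<subseteq> Y' \<Longrightarrow> disj_occ_in A B X' Y'"
  unfolding disj_occ_in_def by (meson order_trans)

text \<open>The witness for \<open>A\<close> uses \<open>e\<close> or the witness for \<open>B\<close> does not.\<close>
lemma disj_occ_in_insert:
  "disj_occ_in A B (insert e X) (insert e Y)
    \<Longrightarrow> disj_occ_in A B (insert e X) Y \<or> disj_occ_in A B X (insert e Y)"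
proof -
  assume "disj_occ_in A B (insert e X) (insert e Y)"
  then obtain S1 S2 where S: "S1 \<subseteq> insert e X" "S2 \<subseteq> insert e Y" "S1 \<inter> S2 = {}" "A S1" "B S2"
    unfolding disj_occ_in_def by blast
  show ?thesis
  proof (cases "e \<in> S1")
    case True
    then have "S2 \<subseteq> Y"
      using S by auto
    then have "disj_occ_in A B (insert e X) Y"
      using S unfolding disj_occ_in_def by blast
    then show ?thesis ..
  next
    case False
    then have "S1 \<subseteq> X"
      using S by auto
    then have "disj_occ_in A B X (insert e Y)"
      using S unfolding disj_occ_in_def by blast
    then show ?thesis ..
  qed
qed

lemma bk_four_point:
  fixes q d00 d01 d10 d11 :: real
  assumes "0 \<le> q" "q \<le> 1" "d11 + d00 \<le> d10 + d01"
  shows "q * (q * d11 + (1 - q) * d11) + (1 - q) * (q * d00 + (1 - q) * d00)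
     \<le> q * (q * d11 + (1 - q) * d10) + (1 - q) * (q * d01 + (1 - q) * d00)"
proof -
  have "q * (q * d11 + (1 - q) * d10) + (1 - q) * (q * d01 + (1 - q) * d00)
      - (q * (q * d11 + (1 - q) * d11) + (1 - q) * (q * d00 + (1 - q) * d00))
      = q * (1 - q) * (d10 + d01 - d11 - d00)"
    by algebra
  moreover have "0 \<le> q * (1 - q) * (d10 + d01 - d11 - d00)"
    using assms by simp
  ultimately show ?thesis
    by linarith
qed

text \<open>The second argument of \<^const>\<open>disj_occ_in\<close> interpolates between the configuration
  \<open>S\<close> itself (\<open>G = {}\<close>) and an independent copy \<open>S'\<close> (\<open>G = F\<close>). Switching the edges to the
  copy one at a time can only increase it, by a four-point inequality at the switched edge.\<close>
definition bk_interp ::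
    "('e \<Rightarrow> real) \<Rightarrow> 'e set \<Rightarrow> ('e set \<Rightarrow> bool) \<Rightarrow> ('e set \<Rightarrow> bool) \<Rightarrow> 'e set \<Rightarrow> real" where
  "bk_interp q F A B G =
     bern_expect q F (\<lambda>S. bern_expect q F (\<lambda>S'. of_bool (disj_occ_in A B S (S' \<inter> G \<union> (S - G)))))"

lemma bk_interp_insert:
  assumes F: "finite F" and q: "bern_params q F" and e: "e \<in> F" "e \<notin> G"
  shows "bk_interp q F A B G \<le> bk_interp q F A B (insert e G)"
proof -
  define F0 where "F0 = F - {e}"
  have F0: "finite F0" "e \<notin> F0" "F = insert e F0"
    using F e unfolding F0_def by auto
  have q0: "bern_params q F0" and qe: "0 \<le> q e" "q e \<le> 1"
    using q e unfolding bern_params_def F0_def by auto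
  define D where "D H S S' = (of_bool (disj_occ_in A B S (S' \<inter> H \<union> (S - H))) :: real)"
    for H S S'
  have expand: "bk_interp q F A B H = bern_expect q F0 (\<lambda>T. bern_expect q F0 (\<lambda>T'.
        q e * (q e * D H (insert e T) (insert e T') + (1 - q e) * D H (insert e T) T')
      + (1 - q e) * (q e * D H T (insert e T') + (1 - q e) * D H T T')))" for H
  proof -
    have "bk_interp q F A B H = bern_expect q F (\<lambda>S. bern_expect q F (D H S))"
      unfolding bk_interp_def D_def ..
    then show ?thesis
      unfolding F0(3) bern_expect_insert[OF F0(1,2)] by (simp add: bern_expect_add bern_expect_cmult)
  qed
  show ?thesis
    unfolding expand
  proof (intro bern_expect_mono[OF q0])
    fix T T' assume T: "T \<subseteq> F0" "T' \<subseteq> F0"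
    define R where "R = T' \<inter> G \<union> (T - G)"
    have mixed:
      "insert e T' \<inter> G \<union> (insert e T - G) = insert e R"
      "T' \<inter> G \<union> (insert e T - G) = insert e R"
      "insert e T' \<inter> G \<union> (T - G) = R"
      "T' \<inter> G \<union> (T - G) = R"
      "insert e T' \<inter> insert e G \<union> (insert e T - insert e G) = insert e R"
      "T' \<inter> insert e G \<union> (insert e T - insert e G) = R"
      "insert e T' \<inter> insert e G \<union> (T - insert e G) = insert e R"
      "T' \<inter> insert e G \<union> (T - insert e G) = R"
      using T e F0 by (auto simp: R_def)
    have "of_bool (disj_occ_in A B (insert e T) (insert e R)) + of_bool (disj_occ_in A B T R)
      \<le> of_bool (disj_occ_in A B (insert e T) R) + (of_bool (disj_occ_in A B T (insert e R)) :: real)"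
      using disj_occ_in_insert[of A B e T R] disj_occ_in_mono[of A B T R "insert e T" "insert e R"]
        disj_occ_in_mono[of A B T R "insert e T" R] disj_occ_in_mono[of A B T R T "insert e R"]
      by (cases "disj_occ_in A B T R") auto
    then show "q e * (q e * D G (insert e T) (insert e T') + (1 - q e) * D G (insert e T) T')
      + (1 - q e) * (q e * D G T (insert e T') + (1 - q e) * D G T T')
      \<le> q e * (q e * D (insert e G) (insert e T) (insert e T') + (1 - q e) * D (insert e G) (insert e T) T')
      + (1 - q e) * (q e * D (insert e G) T (insert e T') + (1 - q e) * D (insert e G) T T')"
      unfolding D_def mixed by (rule bk_four_point[OF qe])
  qed
qed

lemma bk_interp_subset:
  assumes "finite F" "bern_params q F" "G \<subseteq> F"
  shows "bk_interp q F A B {} \<le> bk_interp q F A B G"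
proof -
  have "finite G"
    using assms finite_subset by blast
  from this assms(3) show ?thesis
  proof (induction G rule: finite_induct)
    case (insert e G)
    then show ?case
      using bk_interp_insert[OF assms(1,2), of e G A B] by auto
  qed simp
qed

theorem bk_inequality:
  assumes F: "finite F" and q: "bern_params q F"
    and AB: "increasing_event A" "increasing_event B"
  shows "bern_prob q F (disj_occ A B) \<le> bern_prob q F A * bern_prob q F B"
proof -
  have "bern_prob q F (disj_occ A B) = bk_interp q F A B {}"
    unfolding bk_interp_def bern_prob_def disj_occ_def by (simp add: bern_expect_const[OF F])
  also have "\<dots> \<le> bk_interp q F A B F"
    by (rule bk_interp_subset[OF F q order_refl])
  also have "\<dots> \<le> bern_expect q F (\<lambda>S. bern_expect q F (\<lambda>S'. of_bool (A S) * of_bool (B S')))"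
    unfolding bk_interp_def
  proof (intro bern_expect_mono[OF q])
    fix S S' assume "S \<subseteq> F" "S' \<subseteq> F"
    then have "S' \<inter> F \<union> (S - F) = S'"
      by auto
    then have "A S \<and> B S'" if "disj_occ_in A B S (S' \<inter> F \<union> (S - F))"
      using that increasing_eventD[OF AB(1)] increasing_eventD[OF AB(2)]
      unfolding \<open>S' \<inter> F \<union> (S - F) = S'\<close> disj_occ_in_def by meson
    then show "of_bool (disj_occ_in A B S (S' \<inter> F \<union> (S - F))) \<le> (of_bool (A S) * of_bool (B S') :: real)"
      by (cases "disj_occ_in A B S (S' \<inter> F \<union> (S - F))") simp_all
  qed
  also have "\<dots> = bern_prob q F A * bern_prob q F B"
    unfolding bern_prob_def by (simp add: bern_expect_cmult bern_expect_multc)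
  finally show ?thesis .
qed

section \<open>Connections and branch points\<close>

definition cedge :: "'v set set \<Rightarrow> 'v \<Rightarrow> 'v \<Rightarrow> bool" where
  "cedge S x y \<longleftrightarrow> x \<noteq> y \<and> {x, y} \<in> S"

abbreviation conn :: "'v set set \<Rightarrow> 'v \<Rightarrow> 'v \<Rightarrow> bool" where
  "conn S \<equiv> (cedge S)\<^sup>*\<^sup>*"

lemma conn_mono: "conn S x y \<Longrightarrow> S \<subseteq> T \<Longrightarrow> conn T x y"
proof (induction rule: rtranclp_induct)
  case (step y z)
  then have "cedge T y z"
    unfolding cedge_def by auto
  with step show ?case
    by (meson rtranclp.rtrancl_into_rtrancl)
qed simp

lemma conn_sym: "conn S x y \<Longrightarrow> conn S y x"
proof (induction rule: rtranclp_induct)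
  case (step y z)
  then have "cedge S z y"
    by (auto simp: cedge_def insert_commute)
  with step show ?case
    by (meson converse_rtranclp_into_rtranclp)
qed simp

lemma conn_edge: "x \<noteq> y \<Longrightarrow> {x, y} \<in> S \<Longrightarrow> conn S x y"
  by (rule r_into_rtranclp) (simp add: cedge_def)

lemma conn_in_Union: "conn S x y \<Longrightarrow> y = x \<or> y \<in> \<Union>S"
  by (induction rule: rtranclp_induct) (auto simp: cedge_def)

lemma conn_first_edge: "conn S x y \<Longrightarrow> x \<noteq> y \<Longrightarrow> \<exists>x'. x \<noteq> x' \<and> {x, x'} \<in> S"
  by (erule converse_rtranclpE) (auto simp: cedge_def)

lemma conn_Diff_edge:
  assumes "conn S a b"
  shows "conn (S - {{w, w'}}) a b \<or> conn (S - {{w, w'}}) w b \<or> conn (S - {{w, w'}}) w' b"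
  using assms
proof (induction rule: rtranclp_induct)
  case (step y z)
  show ?case
  proof (cases "{y, z} = {w, w'}")
    case True
    then have "z = w \<or> z = w'"
      by (metis doubleton_eq_iff)
    then show ?thesis
      by auto
  next
    case False
    then have "cedge (S - {{w, w'}}) y z"
      using step(2) unfolding cedge_def by auto
    then show ?thesis
      using step(3) by (meson rtranclp.rtrancl_into_rtrancl)
  qed
qed simp

definition comp_edges :: "'v set set \<Rightarrow> 'v \<Rightarrow> 'v set set" where
  "comp_edges S a = {f \<in> S. \<forall>x\<in>f. conn S a x}"

lemma comp_edges_subset: "comp_edges S a \<subseteq> S"
  unfolding comp_edges_def by auto

lemma conn_comp_edges:
  assumes "conn S a b"
  shows "conn (comp_edges S a) a b"
  using assms
proof (induction rule: rtranclp_induct)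
  case (step y z)
  have "conn S a z"
    using step(1,2) by (meson rtranclp.rtrancl_into_rtrancl)
  then have "cedge (comp_edges S a) y z"
    using step(1,2) unfolding comp_edges_def cedge_def by auto
  then show ?case
    using step(3) by (meson rtranclp.rtrancl_into_rtrancl)
qed simp

lemma comp_edges_disjoint:
  assumes "{} \<notin> S" "\<not> conn S a b"
  shows "comp_edges S a \<inter> comp_edges S b = {}"
proof (rule ccontr)
  assume "comp_edges S a \<inter> comp_edges S b \<noteq> {}"
  then obtain f x where "f \<in> S" "x \<in> f" "conn S a x" "conn S b x"
    using assms(1) unfolding comp_edges_def by fastforce
  then have "conn S a b"
    by (meson conn_sym rtranclp_trans)
  with assms(2) show False ..
qed

definition conn_all :: "'v set set \<Rightarrow> 'v \<Rightarrow> (nat \<Rightarrow> 'v) \<Rightarrow> nat set \<Rightarrow> bool" where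
  "conn_all S u Y I \<longleftrightarrow> (\<forall>i\<in>I. conn S u (Y i))"

lemma conn_all_mono: "conn_all S u Y I \<Longrightarrow> S \<subseteq> T \<Longrightarrow> conn_all T u Y I"
  unfolding conn_all_def by (meson conn_mono)

text \<open>\<open>u\<close> is a branch point of the tree spanned by \<open>w\<close> and the points of \<open>I1 \<union> I2\<close>.\<close>
definition branching ::
    "'v set set \<Rightarrow> 'v \<Rightarrow> 'v \<Rightarrow> (nat \<Rightarrow> 'v) \<Rightarrow> nat set \<Rightarrow> nat set \<Rightarrow> bool" where
  "branching S w u Y I1 I2 \<longleftrightarrow> (\<exists>S0 S1 S2. S0 \<subseteq> S \<and> S1 \<subseteq> S \<and> S2 \<subseteq> S
      \<and> S0 \<inter> S1 = {} \<and> S0 \<inter> S2 = {} \<and> S1 \<inter> S2 = {}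
      \<and> conn S0 w u \<and> conn_all S1 u Y I1 \<and> conn_all S2 u Y I2)"

lemma branchingE:
  assumes "branching S w u Y I1 I2"
  obtains S0 S1 S2 where "S0 \<subseteq> S" "S1 \<subseteq> S" "S2 \<subseteq> S"
    "S0 \<inter> S1 = {}" "S0 \<inter> S2 = {}" "S1 \<inter> S2 = {}"
    "conn S0 w u" "conn_all S1 u Y I1" "conn_all S2 u Y I2"
  using assms unfolding branching_def by blast

lemma branchingI:
  "S0 \<subseteq> S \<Longrightarrow> S1 \<subseteq> S \<Longrightarrow> S2 \<subseteq> S \<Longrightarrow> S0 \<inter> S1 = {} \<Longrightarrow> S0 \<inter> S2 = {} \<Longrightarrow> S1 \<inter> S2 = {}
    \<Longrightarrow> conn S0 w u \<Longrightarrow> conn_all S1 u Y I1 \<Longrightarrow> conn_all S2 u Y I2 \<Longrightarrow> branching S w u Y I1 I2"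
  unfolding branching_def by blast

lemma branching_swap: "branching S w u Y I1 I2 \<Longrightarrow> branching S w u Y I2 I1"
  by (erule branchingE) (rule branchingI; auto)

lemma branching_mono: "branching S w u Y I1 I2 \<Longrightarrow> S \<subseteq> T \<Longrightarrow> branching T w u Y I1 I2"
  by (erule branchingE) (rule branchingI; auto)

lemma branching_at_target:
  assumes "i \<in> I" "Y i = w" "j \<in> I" "j \<noteq> i" "conn_all S w Y I"
  shows "\<exists>I1. I1 \<subseteq> I \<and> I1 \<noteq> {} \<and> I1 \<noteq> I \<and> branching S w w Y I1 (I - I1)"
proof -
  define I1 where "I1 = {i\<in>I. Y i = w}"
  show ?thesis
  proof (cases "I1 = I")
    case True
    then have "\<forall>k\<in>I. Y k = w"
      unfolding I1_def by blast
    then have "branching S w w Y {i} (I - {i})"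
      using assms(1) by (intro branchingI[of "{}" _ "{}" "{}"]) (auto simp: conn_all_def)
    then show ?thesis
      using assms by blast
  next
    case False
    have "branching S w w Y I1 (I - I1)"
      using assms by (intro branchingI[of "{}" _ "{}" S]) (auto simp: conn_all_def I1_def)
    moreover have "I1 \<subseteq> I" "I1 \<noteq> {}"
      using assms unfolding I1_def by auto
    ultimately show ?thesis
      using False by blast
  qed
qed

lemma branching_insert_path:
  assumes "branching S w' u Y I1 I2" "w \<noteq> w'" "{w, w'} \<notin> S"
  shows "branching (insert {w, w'} S) w u Y I1 I2"
proof -
  obtain S0 S1 S2 where S: "S0 \<subseteq> S" "S1 \<subseteq> S" "S2 \<subseteq> S"
    "S0 \<inter> S1 = {}" "S0 \<inter> S2 = {}" "S1 \<inter> S2 = {}"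
    "conn S0 w' u" "conn_all S1 u Y I1" "conn_all S2 u Y I2"
    using assms(1) by (rule branchingE)
  have "conn (insert {w, w'} S0) w w'"
    using assms(2) by (intro conn_edge) auto
  moreover have "conn (insert {w, w'} S0) w' u"
    using S(7) by (rule conn_mono) auto
  ultimately have "conn (insert {w, w'} S0) w u"
    by (rule rtranclp_trans)
  then show ?thesis
    using S assms(3) by (intro branchingI[of "insert {w, w'} S0" _ S1 S2]) auto
qed

text \<open>Since \<open>w\<close> and \<open>w'\<close> are not connected in \<open>S'\<close>, their components are edge-disjoint and
  witness a branching at \<open>w\<close> itself.\<close>
lemma branching_cut_edge:
  assumes S': "{} \<notin> S'" and e: "w \<noteq> w'" "{w, w'} \<notin> S'"
    and IA: "IA = {i\<in>I. \<not> conn S' w (Y i)}" "IA \<noteq> {}"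
    and reach: "\<And>i. i \<in> I \<Longrightarrow> conn S' w (Y i) \<or> conn S' w' (Y i)"
  shows "branching (insert {w, w'} S') w w Y IA (I - IA)"
proof -
  obtain i where i: "i \<in> IA"
    using IA(2) by blast
  have "\<not> conn S' w w'"
  proof
    assume "conn S' w w'"
    moreover have "conn S' w' (Y i)"
      using reach[of i] i IA(1) by auto
    ultimately have "conn S' w (Y i)"
      by (rule rtranclp_trans)
    with i IA(1) show False
      by simp
  qed
  then have disj: "comp_edges S' w \<inter> comp_edges S' w' = {}"
    by (rule comp_edges_disjoint[OF S'])
  have "conn_all (insert {w, w'} (comp_edges S' w')) w Y IA"
    unfolding conn_all_def
  proof
    fix j assume "j \<in> IA"
    then have "conn (comp_edges S' w') w' (Y j)"
      using reach[of j] IA(1) by (auto intro: conn_comp_edges)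
    then have "conn (insert {w, w'} (comp_edges S' w')) w' (Y j)"
      by (rule conn_mono) auto
    moreover have "conn (insert {w, w'} (comp_edges S' w')) w w'"
      using e(1) by (intro conn_edge) auto
    ultimately show "conn (insert {w, w'} (comp_edges S' w')) w (Y j)"
      by (meson rtranclp_trans)
  qed
  moreover have "conn_all (comp_edges S' w) w Y (I - IA)"
    unfolding conn_all_def IA(1) by (auto intro: conn_comp_edges)
  ultimately show ?thesis
    using disj e(2) comp_edges_subset[of S' w] comp_edges_subset[of S' w']
    by (intro branchingI[of "{}" _ "insert {w, w'} (comp_edges S' w')" "comp_edges S' w"]) auto
qed
lemma branching_insert_edge:
  assumes S': "{} \<notin> S'" and e: "w \<noteq> w'" "{w, w'} \<notin> S'"
    and all: "conn_all (insert {w, w'} S') w Y I"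
    and IH: "\<And>x. conn_all S' x Y I
      \<Longrightarrow> \<exists>u I1. I1 \<subseteq> I \<and> I1 \<noteq> {} \<and> I1 \<noteq> I \<and> branching S' x u Y I1 (I - I1)"
  shows "\<exists>u I1. I1 \<subseteq> I \<and> I1 \<noteq> {} \<and> I1 \<noteq> I \<and> branching (insert {w, w'} S') w u Y I1 (I - I1)"
proof -
  have "insert {w, w'} S' - {{w, w'}} = S'"
    using e(2) by auto
  then have reach: "conn S' w (Y k) \<or> conn S' w' (Y k)" if "k \<in> I" for k
    using conn_Diff_edge[of "insert {w, w'} S'" w "Y k" w w'] all that unfolding conn_all_def by auto
  define IA where "IA = {k\<in>I. \<not> conn S' w (Y k)}"
  consider "IA = {}" | "IA = I" | "IA \<noteq> {}" "IA \<noteq> I"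
    by blast
  then show ?thesis
  proof cases
    case 1
    then have "conn_all S' w Y I"
      unfolding IA_def conn_all_def by auto
    then obtain u I1 where "I1 \<subseteq> I" "I1 \<noteq> {}" "I1 \<noteq> I" "branching S' w u Y I1 (I - I1)"
      using IH by blast
    then show ?thesis
      using branching_mono[of S' w u Y I1 "I - I1" "insert {w, w'} S'"] by blast
  next
    case 2
    then have "conn_all S' w' Y I"
      using reach unfolding IA_def conn_all_def by auto
    then obtain u I1 where "I1 \<subseteq> I" "I1 \<noteq> {}" "I1 \<noteq> I" "branching S' w' u Y I1 (I - I1)"
      using IH by blast
    then show ?thesis
      using branching_insert_path[OF _ e] by blast
  next
    case 3
    then have "branching (insert {w, w'} S') w w Y IA (I - IA)"
      using branching_cut_edge[OF S' e IA_def _ reach] by simp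
    moreover have "IA \<subseteq> I"
      unfolding IA_def by auto
    ultimately show ?thesis
      using 3 by blast
  qed
qed

text \<open>Induction on the number of edges: either a point sits at \<open>w\<close>, or an edge \<open>{w, w'}\<close> at \<open>w\<close>
  is removed.\<close>
lemma branching_exists:
  assumes "finite S" "{} \<notin> S" "i \<in> I" "j \<in> I" "i \<noteq> j" "conn_all S w Y I"
  shows "\<exists>u I1. I1 \<subseteq> I \<and> I1 \<noteq> {} \<and> I1 \<noteq> I \<and> branching S w u Y I1 (I - I1)"
  using assms
proof (induction "card S" arbitrary: S w rule: less_induct)
  case less
  show ?case
  proof (cases "\<exists>k\<in>I. Y k = w")
    case True
    then obtain k where k: "k \<in> I" "Y k = w"
      by blast
    have "\<exists>l\<in>I. l \<noteq> k"
      using less.prems(3-5) by (cases "k = i") auto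
    then obtain l where "l \<in> I" "l \<noteq> k"
      by blast
    then show ?thesis
      using branching_at_target[OF k _ _ less.prems(6)] by blast
  next
    case False
    have "conn S w (Y i)" "w \<noteq> Y i"
      using less.prems(3,6) False unfolding conn_all_def by auto
    then obtain w' where w': "w \<noteq> w'" "{w, w'} \<in> S"
      by (metis conn_first_edge)
    define S' where "S' = S - {{w, w'}}"
    have card: "card S' < card S"
      unfolding S'_def by (rule card_Diff1_less[OF less.prems(1) w'(2)])
    have S': "finite S'" "{} \<notin> S'" "{w, w'} \<notin> S'" and S: "S = insert {w, w'} S'"
      using less.prems(1,2) w'(2) unfolding S'_def by auto
    have "\<exists>u I1. I1 \<subseteq> I \<and> I1 \<noteq> {} \<and> I1 \<noteq> I \<and> branching S' x u Y I1 (I - I1)"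
      if "conn_all S' x Y I" for x
      using less.hyps[OF card S'(1,2)] that less.prems(3-5) by blast
    then show ?thesis
      using branching_insert_edge[OF S'(2) w'(1) S'(3)] less.prems(6) unfolding S by blast
  qed
qed

text \<open>The splits of \<open>I\<close> into two nonempty parts, each counted once by putting \<open>Min I\<close> into the
  first part.\<close>
definition splits :: "nat set \<Rightarrow> nat set set" where
  "splits I = {I1. I1 \<subseteq> I \<and> Min I \<in> I1 \<and> I1 \<noteq> I}"

lemma finite_splits: "finite I \<Longrightarrow> finite (splits I)"
  unfolding splits_def by (rule finite_subset[of _ "Pow I"]) auto

lemma splitsD:
  assumes "finite I" "I1 \<in> splits I"
  shows "I1 \<subseteq> I" "I1 \<noteq> {}" "I - I1 \<noteq> {}" "card I1 < card I" "card (I - I1) = card I - card I1"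
proof -
  show sub: "I1 \<subseteq> I" and "I1 \<noteq> {}" and "I - I1 \<noteq> {}"
    using assms(2) unfolding splits_def by auto
  then show "card I1 < card I"
    using assms(1) by (intro psubset_card_mono) auto
  show "card (I - I1) = card I - card I1"
    using sub assms(1) by (intro card_Diff_subset) (auto intro: finite_subset)
qed

lemma branching_exists_split:
  assumes "finite S" "{} \<notin> S" "finite I" "2 \<le> card I" "conn_all S w Y I"
  shows "\<exists>u. \<exists>I1\<in>splits I. branching S w u Y I1 (I - I1)"
proof -
  have "I \<noteq> {}"
    using assms(4) by auto
  then have m: "Min I \<in> I"
    using assms(3) by (rule Min_in[rotated])
  obtain a b where "a \<in> I" "b \<in> I" "a \<noteq> b"
    using assms(4) card_le_Suc0_iff_eq[OF assms(3)] by auto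
  then obtain j where j: "j \<in> I" "j \<noteq> Min I"
    by (cases "a = Min I") auto
  obtain u I1 where u: "I1 \<subseteq> I" "I1 \<noteq> {}" "I1 \<noteq> I" "branching S w u Y I1 (I - I1)"
    using branching_exists[OF assms(1,2) m j(1) j(2)[symmetric] assms(5)] by blast
  show ?thesis
  proof (cases "Min I \<in> I1")
    case True
    then show ?thesis
      using u unfolding splits_def by blast
  next
    case False
    have "branching S w u Y (I - I1) (I - (I - I1))"
      using branching_swap[OF u(4)] u(1) by (simp add: double_diff)
    moreover have "I - I1 \<in> splits I"
      using False m u unfolding splits_def by auto
    ultimately show ?thesis
      by blast
  qed
qed

section \<open>The tree-graph bound\<close>

lemma sum_PiE_mult_split:
  fixes f g :: "('i \<Rightarrow> 'a) \<Rightarrow> real"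
  assumes I: "finite I" "I1 \<subseteq> I"
    and f: "\<And>Y Y'. (\<And>i. i \<in> I1 \<Longrightarrow> Y i = Y' i) \<Longrightarrow> f Y = f Y'"
    and g: "\<And>Y Y'. (\<And>i. i \<in> I - I1 \<Longrightarrow> Y i = Y' i) \<Longrightarrow> g Y = g Y'"
  shows "(\<Sum>Y\<in>PiE I (\<lambda>_. X). f Y * g Y)
    = (\<Sum>Y\<in>PiE I1 (\<lambda>_. X). f Y) * (\<Sum>Y\<in>PiE (I - I1) (\<lambda>_. X). g Y)"
proof -
  define glue where "glue P = (\<lambda>i. if i \<in> I1 then fst P i else snd P i)"
    for P :: "('i \<Rightarrow> 'a) \<times> ('i \<Rightarrow> 'a)"
  have "(\<Sum>Y\<in>PiE I1 (\<lambda>_. X). f Y) * (\<Sum>Y\<in>PiE (I - I1) (\<lambda>_. X). g Y)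
      = (\<Sum>P\<in>PiE I1 (\<lambda>_. X) \<times> PiE (I - I1) (\<lambda>_. X). f (fst P) * g (snd P))"
    by (simp add: sum_product sum.cartesian_product case_prod_beta)
  also have "\<dots> = (\<Sum>Y\<in>PiE I (\<lambda>_. X). f Y * g Y)"
  proof (rule sum.reindex_bij_witness[of _ "\<lambda>Y. (restrict Y I1, restrict Y (I - I1))" glue])
    fix Y assume "Y \<in> PiE I (\<lambda>_. X)"
    then show "glue (restrict Y I1, restrict Y (I - I1)) = Y"
      and "(restrict Y I1, restrict Y (I - I1)) \<in> PiE I1 (\<lambda>_. X) \<times> PiE (I - I1) (\<lambda>_. X)"
      using I by (auto simp: glue_def PiE_iff extensional_def fun_eq_iff)
  next
    fix P assume P: "P \<in> PiE I1 (\<lambda>_. X) \<times> PiE (I - I1) (\<lambda>_. X)"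
    have "f (glue P) = f (fst P)" "g (glue P) = g (snd P)"
      by (auto intro: f g simp: glue_def)
    then show "f (glue P) * g (glue P) = f (fst P) * g (snd P)"
      by simp
    show "(restrict (glue P) I1, restrict (glue P) (I - I1)) = P"
      "glue P \<in> PiE I (\<lambda>_. X)"
      using P I by (auto simp: glue_def PiE_iff extensional_def fun_eq_iff)
  qed
  finally show ?thesis
    by simp
qed

lemma sum_PiE_singleton: "(\<Sum>Y\<in>PiE {i} (\<lambda>_. X). f (Y i)) = (\<Sum>y\<in>X. f y)"
proof (rule sum.reindex_bij_witness[of _ "\<lambda>y. (\<lambda>j. if j = i then y else undefined)" "\<lambda>Y. Y i"])
  fix Y assume "Y \<in> PiE {i} (\<lambda>_. X)"
  then show "(\<lambda>j. if j = i then Y i else undefined) = Y" "Y i \<in> X"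
    by (auto simp: PiE_iff extensional_def fun_eq_iff)
qed (auto simp: PiE_iff extensional_def)

lemma sum_proper_subsets_card:
  assumes "finite A"
  shows "(\<Sum>B\<in>Pow A - {A}. f (card B)) = (\<Sum>j<card A. real (card A choose j) * f j)"
proof -
  have proper: "Pow A - {A} = {B. B \<subseteq> A \<and> card B < card A}"
    using assms by (auto dest: card_subset_eq intro: psubset_card_mono)
  have "(\<Sum>B\<in>Pow A - {A}. f (card B))
      = (\<Sum>j<card A. \<Sum>B\<in>{B\<in>Pow A - {A}. card B = j}. f (card B))"
    by (rule sum.group[symmetric]) (use assms proper in auto)
  also have "\<dots> = (\<Sum>j<card A. real (card A choose j) * f j)"
  proof (rule sum.cong[OF refl])
    fix j assume "j \<in> {..<card A}"
    then have "{B\<in>Pow A - {A}. card B = j} = {B. B \<subseteq> A \<and> card B = j}"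
      using proper by auto
    then show "(\<Sum>B\<in>{B\<in>Pow A - {A}. card B = j}. f (card B)) = real (card A choose j) * f j"
      using n_subsets[OF assms, of j] by simp
  qed
  finally show ?thesis .
qed

lemma sum_splits_odd_dfact:
  assumes I: "finite I" "card I = r" "r \<ge> 2"
  shows "(\<Sum>I1\<in>splits I. real (odd_dfact (card I1) * odd_dfact (r - card I1))) = real (odd_dfact r)"
proof -
  define m where "m = Min I"
  have m: "m \<in> I"
    unfolding m_def using I by (intro Min_in) auto
  define I' where "I' = I - {m}"
  have I': "finite I'" "card I' = r - 1"
    using I m unfolding I'_def by auto
  define h where "h a = real (odd_dfact a * odd_dfact (r - a))" for a
  have "(\<Sum>I1\<in>splits I. h (card I1)) = (\<Sum>J\<in>Pow I' - {I'}. h (card J + 1))"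
  proof (rule sum.reindex_bij_witness[of _ "insert m" "\<lambda>I1. I1 - {m}"])
    fix J assume J: "J \<in> Pow I' - {I'}"
    then have "m \<notin> J"
      unfolding I'_def by auto
    then show "insert m J - {m} = J"
      by auto
    show "insert m J \<in> splits I"
      using J m unfolding splits_def I'_def m_def by auto
  next
    fix I1 assume I1: "I1 \<in> splits I"
    then have "finite I1" "m \<in> I1"
      using I(1) finite_subset unfolding splits_def m_def by auto
    then have "card I1 = Suc (card (I1 - {m}))"
      by (rule card.remove)
    then show "h (card (I1 - {m}) + 1) = h (card I1)"
      by simp
    from I1 show "insert m (I1 - {m}) = I1" "I1 - {m} \<in> Pow I' - {I'}"
      unfolding splits_def I'_def m_def by auto
  qed
  also have "\<dots> = (\<Sum>j<r - 1. real ((r - 1) choose j) * h (j + 1))"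
    using sum_proper_subsets_card[OF I'(1), of "\<lambda>c. h (c + 1)"] I'(2) by simp
  also have "\<dots> = (\<Sum>k=1..r-1. real ((r - 1) choose (k - 1)) * h k)"
    by (rule sum.reindex_bij_witness[of _ "\<lambda>k. k - 1" "\<lambda>j. j + 1"]) auto
  also have "\<dots> = real (odd_dfact r)"
    using arg_cong[OF odd_dfact_convolution_first[of r], of real] I
    unfolding h_def by (simp add: mult.assoc)
  finally show ?thesis
    unfolding h_def .
qed

definition conn_pair :: "'v \<Rightarrow> 'v \<Rightarrow> 'v \<Rightarrow> 'v set set \<Rightarrow> bool" where
  "conn_pair w a b S \<longleftrightarrow> conn S w a \<and> conn S w b"

text \<open>The event that \<open>a\<close> is the branch point of the tree spanned by the points of \<open>I\<close>, or
  the single point itself when \<open>I\<close> is a singleton.\<close>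
definition node_event :: "'v \<Rightarrow> (nat \<Rightarrow> 'v) \<Rightarrow> nat set \<Rightarrow> 'v set set \<Rightarrow> bool" where
  "node_event a Y I S \<longleftrightarrow> (if card I = 1 then a = Y (the_elem I)
     else (\<exists>I1\<in>splits I. disj_occ (\<lambda>S. conn_all S a Y I1) (\<lambda>S. conn_all S a Y (I - I1)) S))"

lemma increasing_event_conn: "increasing_event (\<lambda>S. conn S w u)"
  unfolding increasing_event_def by (metis conn_mono)

lemma increasing_event_conn_all: "increasing_event (\<lambda>S. conn_all S u Y I)"
  unfolding increasing_event_def by (metis conn_all_mono)

lemma increasing_event_conn_pair: "increasing_event (conn_pair w a b)"
  unfolding increasing_event_def conn_pair_def by (metis conn_mono)

lemma increasing_event_node_event: "increasing_event (node_event a Y I)"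
  unfolding increasing_event_def
proof (intro allI impI)
  fix S T assume event: "node_event a Y I S" and "S \<subseteq> T"
  show "node_event a Y I T"
  proof (cases "card I = 1")
    case True
    with event show ?thesis
      by (simp add: node_event_def)
  next
    case False
    with event obtain I1 where I1: "I1 \<in> splits I"
      "disj_occ (\<lambda>S. conn_all S a Y I1) (\<lambda>S. conn_all S a Y (I - I1)) S"
      by (auto simp: node_event_def)
    then have "disj_occ (\<lambda>S. conn_all S a Y I1) (\<lambda>S. conn_all S a Y (I - I1)) T"
      using increasing_eventD[OF increasing_event_disj_occ _ \<open>S \<subseteq> T\<close>] by blast
    with False I1(1) show ?thesis
      by (auto simp: node_event_def)
  qed
qed

lemma branching_disj_occ:
  assumes "branching S w u Y I1 I2"
  shows "disj_occ (\<lambda>S. conn S w u) (disj_occ (\<lambda>S. conn_all S u Y I1) (\<lambda>S. conn_all S u Y I2)) S"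
proof -
  obtain S0 S1 S2 where S: "S0 \<subseteq> S" "S1 \<subseteq> S" "S2 \<subseteq> S" "S0 \<inter> S1 = {}" "S0 \<inter> S2 = {}"
    "S1 \<inter> S2 = {}" "conn S0 w u" "conn_all S1 u Y I1" "conn_all S2 u Y I2"
    using assms by (rule branchingE)
  have "disj_occ (\<lambda>S. conn_all S u Y I1) (\<lambda>S. conn_all S u Y I2) (S1 \<union> S2)"
    unfolding disj_occ_def disj_occ_in_def using S by (intro exI[of _ S1] exI[of _ S2]) auto
  then show ?thesis
    unfolding disj_occ_def[of "\<lambda>S. conn S w u"] disj_occ_in_def
    using S by (intro exI[of _ S0] exI[of _ "S1 \<union> S2"]) auto
qed

locale finite_perc =
  fixes q :: "'v set \<Rightarrow> real" and F :: "'v set set" and X :: "'v set"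
  assumes finite_F: "finite F" and bern_params_F: "bern_params q F" and empty_notin_F: "{} \<notin> F"
    and finite_X: "finite X" and Union_F_subset: "\<Union>F \<subseteq> X"
begin

abbreviation P :: "('v set set \<Rightarrow> bool) \<Rightarrow> real" where
  "P \<equiv> bern_prob q F"

definition p_conn_all :: "'v \<Rightarrow> (nat \<Rightarrow> 'v) \<Rightarrow> nat set \<Rightarrow> real" where
  "p_conn_all u Y I = P (\<lambda>S. conn_all S u Y I)"

text \<open>The \<open>card I\<close>-th moment of the cluster of \<open>u\<close>, see \<open>moment_eq_expect\<close>.\<close>
definition moment :: "'v \<Rightarrow> nat set \<Rightarrow> real" where
  "moment u I = (\<Sum>Y\<in>PiE I (\<lambda>_. X). p_conn_all u Y I)"

definition node_weight :: "'v \<Rightarrow> (nat \<Rightarrow> 'v) \<Rightarrow> nat set \<Rightarrow> real" where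
  "node_weight a Y I = (if card I = 1 then of_bool (a = Y (the_elem I))
     else (\<Sum>I1\<in>splits I. p_conn_all a Y I1 * p_conn_all a Y (I - I1)))"

definition node_moment :: "'v \<Rightarrow> nat set \<Rightarrow> real" where
  "node_moment a I = (\<Sum>Y\<in>PiE I (\<lambda>_. X). node_weight a Y I)"

definition branching_event :: "'v \<Rightarrow> (nat \<Rightarrow> 'v) \<Rightarrow> nat set \<Rightarrow> nat set \<Rightarrow> 'v set set \<Rightarrow> bool" where
  "branching_event w Y I1 I2 S \<longleftrightarrow> (\<exists>u\<in>X. branching S w u Y I1 I2)"

lemma P_nonneg: "0 \<le> P A"
  by (rule bern_prob_nonneg[OF bern_params_F])

lemma p_conn_all_nonneg: "0 \<le> p_conn_all u Y I"
  unfolding p_conn_all_def by (rule P_nonneg)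

lemma node_weight_nonneg: "0 \<le> node_weight a Y I"
  unfolding node_weight_def by (auto intro!: sum_nonneg mult_nonneg_nonneg p_conn_all_nonneg)

lemma moment_nonneg: "0 \<le> moment u I"
  unfolding moment_def by (auto intro!: sum_nonneg p_conn_all_nonneg)

lemma node_moment_nonneg: "0 \<le> node_moment u I"
  unfolding node_moment_def by (auto intro!: sum_nonneg node_weight_nonneg)

lemma conn_in_X: "S \<subseteq> F \<Longrightarrow> conn S w u \<Longrightarrow> w \<in> X \<Longrightarrow> u \<in> X"
  using conn_in_Union[of S w u] Union_F_subset by auto

lemma P_disj_occ3_le:
  assumes "increasing_event A" "increasing_event B" "increasing_event C"
  shows "P (disj_occ A (disj_occ B C)) \<le> P A * P B * P C"
proof -
  have "P (disj_occ A (disj_occ B C)) \<le> P A * P (disj_occ B C)"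
    by (rule bk_inequality[OF finite_F bern_params_F assms(1) increasing_event_disj_occ])
  also have "\<dots> \<le> P A * (P B * P C)"
    by (rule mult_left_mono[OF bk_inequality[OF finite_F bern_params_F assms(2,3)] P_nonneg])
  finally show ?thesis
    by (simp add: mult.assoc)
qed

lemma p_conn_all_cong: "(\<And>i. i \<in> I \<Longrightarrow> Y i = Y' i) \<Longrightarrow> p_conn_all u Y I = p_conn_all u Y' I"
  unfolding p_conn_all_def conn_all_def by simp

lemma node_weight_cong:
  assumes "finite I" "\<And>i. i \<in> I \<Longrightarrow> Y i = Y' i"
  shows "node_weight a Y I = node_weight a Y' I"
proof (cases "card I = 1")
  case True
  then obtain i where "I = {i}"
    by (meson card_1_singletonE)
  then show ?thesis
    using assms unfolding node_weight_def by simp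
next
  case False
  have "p_conn_all a Y I1 * p_conn_all a Y (I - I1) = p_conn_all a Y' I1 * p_conn_all a Y' (I - I1)"
    if "I1 \<in> splits I" for I1
    using that assms p_conn_all_cong[of I1 Y Y' a] p_conn_all_cong[of "I - I1" Y Y' a]
    unfolding splits_def by auto
  then show ?thesis
    using False unfolding node_weight_def by simp
qed

lemma p_conn_all_le_branching:
  assumes "finite I" "2 \<le> card I" "w \<in> X"
  shows "p_conn_all w Y I \<le> (\<Sum>I1\<in>splits I. P (branching_event w Y I1 (I - I1)))"
proof -
  have "p_conn_all w Y I \<le> P (\<lambda>S. \<exists>I1\<in>splits I. branching_event w Y I1 (I - I1) S)"
    unfolding p_conn_all_def
  proof (rule bern_prob_mono[OF bern_params_F])
    fix S assume S: "S \<subseteq> F" "conn_all S w Y I"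
    have "finite S" "{} \<notin> S"
      using S finite_F empty_notin_F finite_subset by auto
    then obtain u I1 where u: "I1 \<in> splits I" "branching S w u Y I1 (I - I1)"
      using branching_exists_split[OF _ _ assms(1,2) S(2)] by blast
    from u(2) obtain S0 where "S0 \<subseteq> S" "conn S0 w u"
      by (rule branchingE) blast
    then have "u \<in> X"
      using conn_in_X S(1) assms(3) by blast
    then show "\<exists>I1\<in>splits I. branching_event w Y I1 (I - I1) S"
      using u unfolding branching_event_def by blast
  qed
  also have "\<dots> \<le> (\<Sum>I1\<in>splits I. P (branching_event w Y I1 (I - I1)))"
    by (rule bern_prob_Union_le[OF bern_params_F finite_splits[OF assms(1)]])
  finally show ?thesis .
qed

lemma P_branching_event_le_path:
  "P (branching_event w Y I1 I2) \<le> (\<Sum>u\<in>X. P (\<lambda>S. conn S w u) * p_conn_all u Y I1 * p_conn_all u Y I2)"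
proof -
  have "P (branching_event w Y I1 I2) \<le>
      P (\<lambda>S. \<exists>u\<in>X. disj_occ (\<lambda>S. conn S w u) (disj_occ (\<lambda>S. conn_all S u Y I1) (\<lambda>S. conn_all S u Y I2)) S)"
  proof (rule bern_prob_mono[OF bern_params_F])
    fix S assume "branching_event w Y I1 I2 S"
    then obtain u where u: "u \<in> X" "branching S w u Y I1 I2"
      unfolding branching_event_def by blast
    show "\<exists>u\<in>X. disj_occ (\<lambda>S. conn S w u)
        (disj_occ (\<lambda>S. conn_all S u Y I1) (\<lambda>S. conn_all S u Y I2)) S"
      using u(1) branching_disj_occ[OF u(2)] by blast
  qed
  also have "\<dots> \<le> (\<Sum>u\<in>X. P (disj_occ (\<lambda>S. conn S w u) (disj_occ (\<lambda>S. conn_all S u Y I1) (\<lambda>S. conn_all S u Y I2))))"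
    by (rule bern_prob_Union_le[OF bern_params_F finite_X])
  also have "\<dots> \<le> (\<Sum>u\<in>X. P (\<lambda>S. conn S w u) * p_conn_all u Y I1 * p_conn_all u Y I2)"
    unfolding p_conn_all_def
    by (intro sum_mono P_disj_occ3_le increasing_event_conn increasing_event_conn_all)
  finally show ?thesis .
qed

lemma P_node_event_le:
  assumes "finite I"
  shows "P (node_event a Y I) \<le> node_weight a Y I"
proof (cases "card I = 1")
  case True
  then show ?thesis
    unfolding node_event_def node_weight_def bern_prob_def by (simp add: bern_expect_const[OF finite_F])
next
  case False
  have "P (node_event a Y I)
      = P (\<lambda>S. \<exists>I1\<in>splits I. disj_occ (\<lambda>S. conn_all S a Y I1) (\<lambda>S. conn_all S a Y (I - I1)) S)"
    unfolding node_event_def using False by simp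
  also have "\<dots> \<le> (\<Sum>I1\<in>splits I. P (disj_occ (\<lambda>S. conn_all S a Y I1) (\<lambda>S. conn_all S a Y (I - I1))))"
    by (rule bern_prob_Union_le[OF bern_params_F finite_splits[OF assms]])
  also have "\<dots> \<le> node_weight a Y I"
    unfolding node_weight_def p_conn_all_def using False
    by (auto intro!: sum_mono bk_inequality[OF finite_F bern_params_F] increasing_event_conn_all)
  finally show ?thesis .
qed

lemma conn_all_node_decomp:
  assumes S1: "S1 \<subseteq> F" "conn_all S1 u Y I" and I: "finite I" "I \<noteq> {}" and u: "u \<in> X"
  shows "\<exists>a\<in>X. \<exists>T N. T \<subseteq> S1 \<and> N \<subseteq> S1 \<and> T \<inter> N = {} \<and> conn T u a \<and> node_event a Y I N"
proof (cases "card I = 1")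
  case True
  then obtain i where i: "I = {i}"
    by (meson card_1_singletonE)
  have c: "conn S1 u (Y i)"
    using S1 i unfolding conn_all_def by auto
  then have "Y i \<in> X"
    using conn_in_X S1 u by blast
  moreover have "node_event (Y i) Y I {}"
    using i unfolding node_event_def by simp
  ultimately show ?thesis
    using c by (intro bexI[of _ "Y i"] exI[of _ S1] exI[of _ "{}"]) auto
next
  case False
  have "card I \<noteq> 0"
    using I by simp
  with False have "2 \<le> card I"
    by linarith
  moreover have "finite S1" "{} \<notin> S1"
    using S1 finite_F empty_notin_F finite_subset by auto
  ultimately obtain a I1 where a: "I1 \<in> splits I" "branching S1 u a Y I1 (I - I1)"
    using branching_exists_split[OF _ _ I(1) _ S1(2)] by blast
  from a(2) obtain S0 Sa Sb where S: "S0 \<subseteq> S1" "Sa \<subseteq> S1" "Sb \<subseteq> S1" "S0 \<inter> Sa = {}"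
    "S0 \<inter> Sb = {}" "Sa \<inter> Sb = {}" "conn S0 u a" "conn_all Sa a Y I1" "conn_all Sb a Y (I - I1)"
    by (rule branchingE)
  have "a \<in> X"
    using conn_in_X[of S0 u a] S S1 u by auto
  moreover have "disj_occ (\<lambda>S. conn_all S a Y I1) (\<lambda>S. conn_all S a Y (I - I1)) (Sa \<union> Sb)"
    unfolding disj_occ_def disj_occ_in_def using S by (intro exI[of _ Sa] exI[of _ Sb]) auto
  then have "node_event a Y I (Sa \<union> Sb)"
    unfolding node_event_def using False a(1) by auto
  ultimately show ?thesis
    using S by (intro bexI[of _ a] exI[of _ S0] exI[of _ "Sa \<union> Sb"]) auto
qed

lemma branching_conn_pair_node_events:
  assumes I: "finite I" "I1 \<in> splits I" and S: "S \<subseteq> F" "branching S w u Y I1 (I - I1)"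
    and u: "u \<in> X"
  shows "\<exists>a\<in>X. \<exists>b\<in>X.
    disj_occ (conn_pair w a b) (disj_occ (node_event a Y I1) (node_event b Y (I - I1))) S"
proof -
  have I1: "finite I1" "I1 \<noteq> {}" "finite (I - I1)" "I - I1 \<noteq> {}"
    using splitsD[OF I] I(1) finite_subset by auto
  from S(2) obtain S0 S1 S2 where s: "S0 \<subseteq> S" "S1 \<subseteq> S" "S2 \<subseteq> S" "S0 \<inter> S1 = {}"
    "S0 \<inter> S2 = {}" "S1 \<inter> S2 = {}" "conn S0 w u" "conn_all S1 u Y I1" "conn_all S2 u Y (I - I1)"
    by (rule branchingE)
  have "S1 \<subseteq> F" "S2 \<subseteq> F"
    using s S(1) by auto
  obtain a T1 N1 where n1: "a \<in> X" "T1 \<subseteq> S1" "N1 \<subseteq> S1" "T1 \<inter> N1 = {}" "conn T1 u a"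
    "node_event a Y I1 N1"
    using conn_all_node_decomp[OF \<open>S1 \<subseteq> F\<close> s(8) I1(1,2) u] by blast
  obtain b T2 N2 where n2: "b \<in> X" "T2 \<subseteq> S2" "N2 \<subseteq> S2" "T2 \<inter> N2 = {}" "conn T2 u b"
    "node_event b Y (I - I1) N2"
    using conn_all_node_decomp[OF \<open>S2 \<subseteq> F\<close> s(9) I1(3,4) u] by blast
  define B where "B = S0 \<union> T1 \<union> T2"
  have "conn B w u" "conn B u a" "conn B u b"
    unfolding B_def using s n1 n2 by (auto intro: conn_mono)
  then have "conn_pair w a b B"
    unfolding conn_pair_def by (meson rtranclp_trans)
  moreover have "disj_occ (node_event a Y I1) (node_event b Y (I - I1)) (N1 \<union> N2)"
    unfolding disj_occ_def disj_occ_in_def using n1 n2 s by (intro exI[of _ N1] exI[of _ N2]) auto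
  moreover have "B \<subseteq> S" "N1 \<union> N2 \<subseteq> S" "B \<inter> (N1 \<union> N2) = {}"
    unfolding B_def using s n1 n2 by auto
  ultimately have "disj_occ (conn_pair w a b) (disj_occ (node_event a Y I1) (node_event b Y (I - I1))) S"
    unfolding disj_occ_def[of "conn_pair w a b"] disj_occ_in_def
    by (intro exI[of _ B] exI[of _ "N1 \<union> N2"]) auto
  then show ?thesis
    using n1(1) n2(1) by blast
qed

lemma P_branching_event_le_pair:
  assumes I: "finite I" "I1 \<in> splits I"
  shows "P (branching_event w Y I1 (I - I1))
    \<le> (\<Sum>a\<in>X. \<Sum>b\<in>X. P (conn_pair w a b) * node_weight a Y I1 * node_weight b Y (I - I1))"
proof -
  have I1: "finite I1" "finite (I - I1)"
    using splitsD[OF I] I(1) finite_subset by auto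
  let ?E = "\<lambda>ab. disj_occ (conn_pair w (fst ab) (snd ab))
    (disj_occ (node_event (fst ab) Y I1) (node_event (snd ab) Y (I - I1)))"
  have "P (branching_event w Y I1 (I - I1)) \<le> P (\<lambda>S. \<exists>ab\<in>X \<times> X. ?E ab S)"
  proof (rule bern_prob_mono[OF bern_params_F])
    fix S assume S: "S \<subseteq> F" "branching_event w Y I1 (I - I1) S"
    then obtain u where "u \<in> X" "branching S w u Y I1 (I - I1)"
      unfolding branching_event_def by blast
    then obtain a b where "a \<in> X" "b \<in> X"
      "disj_occ (conn_pair w a b) (disj_occ (node_event a Y I1) (node_event b Y (I - I1))) S"
      using branching_conn_pair_node_events[OF I S(1)] by blast
    then show "\<exists>ab\<in>X \<times> X. ?E ab S"
      by (intro bexI[of _ "(a, b)"]) auto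
  qed
  also have "\<dots> \<le> (\<Sum>ab\<in>X \<times> X. P (?E ab))"
    by (rule bern_prob_Union_le[OF bern_params_F]) (use finite_X in auto)
  also have "\<dots> \<le> (\<Sum>ab\<in>X \<times> X. P (conn_pair w (fst ab) (snd ab))
      * node_weight (fst ab) Y I1 * node_weight (snd ab) Y (I - I1))"
  proof (rule sum_mono)
    fix ab :: "'v \<times> 'v"
    have "P (?E ab) \<le> P (conn_pair w (fst ab) (snd ab)) * P (node_event (fst ab) Y I1)
        * P (node_event (snd ab) Y (I - I1))"
      by (intro P_disj_occ3_le increasing_event_conn_pair increasing_event_node_event)
    also have "\<dots> \<le> P (conn_pair w (fst ab) (snd ab)) * node_weight (fst ab) Y I1
        * node_weight (snd ab) Y (I - I1)"
      by (intro mult_mono P_node_event_le I1 P_nonneg node_weight_nonneg mult_nonneg_nonneg order_refl)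
    finally show "P (?E ab) \<le> P (conn_pair w (fst ab) (snd ab))
        * node_weight (fst ab) Y I1 * node_weight (snd ab) Y (I - I1)" .
  qed
  also have "\<dots> = (\<Sum>a\<in>X. \<Sum>b\<in>X. P (conn_pair w a b) * node_weight a Y I1 * node_weight b Y (I - I1))"
    by (simp add: sum.cartesian_product case_prod_beta)
  finally show ?thesis .
qed

lemma moment_le_branching_sum:
  assumes "finite I" "2 \<le> card I" "w \<in> X"
  shows "moment w I \<le> (\<Sum>I1\<in>splits I. \<Sum>Y\<in>PiE I (\<lambda>_. X). P (branching_event w Y I1 (I - I1)))"
proof -
  have "moment w I \<le> (\<Sum>Y\<in>PiE I (\<lambda>_. X). \<Sum>I1\<in>splits I. P (branching_event w Y I1 (I - I1)))"
    unfolding moment_def by (intro sum_mono p_conn_all_le_branching assms)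
  then show ?thesis
    by (simp only: sum.swap[of _ "PiE I (\<lambda>_. X)"])
qed

lemma sum_branching_event_le_path:
  assumes I: "finite I" "I1 \<in> splits I"
  shows "(\<Sum>Y\<in>PiE I (\<lambda>_. X). P (branching_event w Y I1 (I - I1)))
     \<le> (\<Sum>u\<in>X. P (\<lambda>S. conn S w u) * (moment u I1 * moment u (I - I1)))"
proof -
  have "(\<Sum>Y\<in>PiE I (\<lambda>_. X). P (branching_event w Y I1 (I - I1)))
      \<le> (\<Sum>Y\<in>PiE I (\<lambda>_. X). \<Sum>u\<in>X. P (\<lambda>S. conn S w u) * (p_conn_all u Y I1 * p_conn_all u Y (I - I1)))"
    by (intro sum_mono order.trans[OF P_branching_event_le_path]) (simp add: mult.assoc)
  also have "\<dots> = (\<Sum>u\<in>X. P (\<lambda>S. conn S w u)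
      * (\<Sum>Y\<in>PiE I (\<lambda>_. X). p_conn_all u Y I1 * p_conn_all u Y (I - I1)))"
    by (simp add: sum.swap[of _ "PiE I (\<lambda>_. X)"] sum_distrib_left)
  also have "\<dots> = (\<Sum>u\<in>X. P (\<lambda>S. conn S w u) * (moment u I1 * moment u (I - I1)))"
    unfolding moment_def using splitsD(1)[OF I]
    by (subst sum_PiE_mult_split[OF I(1)]) (auto intro: p_conn_all_cong)
  finally show ?thesis .
qed

lemma sum_branching_event_le_pair:
  assumes I: "finite I" "I1 \<in> splits I"
  shows "(\<Sum>Y\<in>PiE I (\<lambda>_. X). P (branching_event w Y I1 (I - I1)))
     \<le> (\<Sum>a\<in>X. \<Sum>b\<in>X. P (conn_pair w a b) * (node_moment a I1 * node_moment b (I - I1)))"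
proof -
  have sub: "I1 \<subseteq> I" "finite I1" "finite (I - I1)"
    using splitsD(1)[OF I] I(1) finite_subset by auto
  have "(\<Sum>Y\<in>PiE I (\<lambda>_. X). P (branching_event w Y I1 (I - I1)))
      \<le> (\<Sum>Y\<in>PiE I (\<lambda>_. X). \<Sum>a\<in>X. \<Sum>b\<in>X.
          P (conn_pair w a b) * (node_weight a Y I1 * node_weight b Y (I - I1)))"
    by (intro sum_mono order.trans[OF P_branching_event_le_pair[OF I]]) (simp add: mult.assoc)
  also have "\<dots> = (\<Sum>a\<in>X. \<Sum>b\<in>X. P (conn_pair w a b)
      * (\<Sum>Y\<in>PiE I (\<lambda>_. X). node_weight a Y I1 * node_weight b Y (I - I1)))"
    by (simp add: sum.swap[of _ "PiE I (\<lambda>_. X)"] sum_distrib_left)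
  also have "\<dots> = (\<Sum>a\<in>X. \<Sum>b\<in>X. P (conn_pair w a b) * (node_moment a I1 * node_moment b (I - I1)))"
    unfolding node_moment_def using sub
    by (subst sum_PiE_mult_split[OF I(1) sub(1)]) (auto intro: node_weight_cong)
  finally show ?thesis .
qed

lemma node_moment_eq_split:
  assumes "finite I" "2 \<le> card I"
  shows "node_moment a I = (\<Sum>I1\<in>splits I. moment a I1 * moment a (I - I1))"
proof -
  have "node_moment a I = (\<Sum>Y\<in>PiE I (\<lambda>_. X). \<Sum>I1\<in>splits I. p_conn_all a Y I1 * p_conn_all a Y (I - I1))"
    unfolding node_moment_def node_weight_def using assms by simp
  also have "\<dots> = (\<Sum>I1\<in>splits I. \<Sum>Y\<in>PiE I (\<lambda>_. X). p_conn_all a Y I1 * p_conn_all a Y (I - I1))"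
    by (rule sum.swap)
  also have "\<dots> = (\<Sum>I1\<in>splits I. moment a I1 * moment a (I - I1))"
    unfolding moment_def using splitsD(1)[OF assms(1)]
    by (intro sum.cong refl sum_PiE_mult_split[OF assms(1)]) (auto intro: p_conn_all_cong)
  finally show ?thesis .
qed

lemma moment_singleton: "moment u {i} = (\<Sum>y\<in>X. P (\<lambda>S. conn S u y))"
  unfolding moment_def p_conn_all_def conn_all_def
  using sum_PiE_singleton[of "\<lambda>y. P (\<lambda>S. conn S u y)"] by simp

lemma node_moment_singleton: "a \<in> X \<Longrightarrow> node_moment a {i} = 1"
  unfolding node_moment_def node_weight_def using finite_X
  by (simp add: sum_PiE_singleton[where f = "\<lambda>y. of_bool (a = y)"])

lemma card_cluster_eq_sum: "real (card ({x. conn S u x} \<inter> X)) = (\<Sum>y\<in>X. of_bool (conn S u y))"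
  using finite_X by (simp add: Int_commute)

lemma sum_P_conn_eq_expect:
  "(\<Sum>y\<in>X. P (\<lambda>S. conn S u y)) = bern_expect q F (\<lambda>S. real (card ({x. conn S u x} \<inter> X)))"
  unfolding bern_prob_def card_cluster_eq_sum by (simp add: bern_expect_sum)

lemma sum_P_conn_pair_eq_expect:
  "(\<Sum>a\<in>X. \<Sum>b\<in>X. P (conn_pair u a b)) = bern_expect q F (\<lambda>S. real (card ({x. conn S u x} \<inter> X)) ^ 2)"
proof -
  have "real (card ({x. conn S u x} \<inter> X)) ^ 2 = (\<Sum>a\<in>X. \<Sum>b\<in>X. of_bool (conn_pair u a b S))" for S
    unfolding card_cluster_eq_sum power2_eq_square sum_product conn_pair_def of_bool_conj ..
  then show ?thesis
    unfolding bern_prob_def by (simp add: bern_expect_sum)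
qed

lemma moment_eq_expect:
  assumes "finite I"
  shows "moment u I = bern_expect q F (\<lambda>S. real (card ({x. conn S u x} \<inter> X)) ^ card I)"
proof -
  have "real (card ({x. conn S u x} \<inter> X)) ^ card I = (\<Sum>Y\<in>PiE I (\<lambda>_. X). of_bool (conn_all S u Y I))"
    for S
  proof -
    have "PiE I (\<lambda>_. X) \<inter> {Y. conn_all S u Y I} = PiE I (\<lambda>_. {x. conn S u x} \<inter> X)"
      by (auto simp: conn_all_def PiE_iff)
    then show ?thesis
      using finite_X assms by (simp add: finite_PiE card_PiE)
  qed
  then show ?thesis
    unfolding moment_def p_conn_all_def bern_prob_def by (simp add: bern_expect_sum)
qed

end

lemma nat_le_add_split: "k \<le> m + n \<Longrightarrow> \<exists>k1 k2. k = k1 + k2 \<and> k1 \<le> m \<and> k2 \<le> (n::nat)"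
  by (intro exI[of _ "min k m"] exI[of _ "k - min k m"]) auto

lemma three_mul_le_of_le_half: "1 \<le> a \<Longrightarrow> k \<le> a div 2 \<Longrightarrow> 3 * k \<le> 2 * a - (1::nat)"
  by (cases "even a") (auto elim!: evenE oddE)

lemma three_mul_le_of_le_half_pred: "1 \<le> a \<Longrightarrow> k \<le> (a - 1) div 2 \<Longrightarrow> 3 * k \<le> 2 * a - (2::nat)"
  by (cases "even a") (auto elim!: evenE oddE)

lemma mult_power_combine:
  "(x::real) * m ^ k1 * c ^ e1 * (y * m ^ k2 * c ^ e2) = x * y * m ^ (k1 + k2) * c ^ (e1 + e2)"
  by (simp add: power_add algebra_simps)

locale finite_perc_bounds = finite_perc +
  fixes chi M2 :: real
  assumes chi_nonneg: "0 \<le> chi" and M2_nonneg: "0 \<le> M2"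
    and sum_P_conn_le: "\<And>u. u \<in> X \<Longrightarrow> (\<Sum>y\<in>X. P (\<lambda>S. conn S u y)) \<le> chi"
    and sum_P_conn_pair_le: "\<And>u. u \<in> X \<Longrightarrow> (\<Sum>a\<in>X. \<Sum>b\<in>X. P (conn_pair u a b)) \<le> M2"
begin

definition moment_bound :: "nat \<Rightarrow> nat \<Rightarrow> real" where
  "moment_bound r k = real (odd_dfact r) * M2 ^ k * chi ^ (2 * r - 1 - 3 * k)"

definition node_bound :: "nat \<Rightarrow> nat \<Rightarrow> real" where
  "node_bound r k = real (odd_dfact r) * M2 ^ k * chi ^ (2 * r - 2 - 3 * k)"

lemma moment_bound_nonneg: "0 \<le> moment_bound r k"
  unfolding moment_bound_def using chi_nonneg M2_nonneg by simp

lemma moment_bound_mult: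
  assumes "1 \<le> a" "1 \<le> b" "k1 \<le> a div 2" "k2 \<le> b div 2"
  shows "moment_bound a k1 * moment_bound b k2
    = real (odd_dfact a * odd_dfact b) * M2 ^ (k1 + k2) * chi ^ (2 * (a + b) - 2 - 3 * (k1 + k2))"
proof -
  have "(2 * a - 1 - 3 * k1) + (2 * b - 1 - 3 * k2) = 2 * (a + b) - 2 - 3 * (k1 + k2)"
    using three_mul_le_of_le_half[OF assms(1,3)] three_mul_le_of_le_half[OF assms(2,4)] assms(1,2)
    by simp
  then show ?thesis
    unfolding moment_bound_def mult_power_combine by simp
qed

lemma node_bound_mult:
  assumes "1 \<le> a" "1 \<le> b" "k1 \<le> (a - 1) div 2" "k2 \<le> (b - 1) div 2"
  shows "node_bound a k1 * node_bound b k2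
    = real (odd_dfact a * odd_dfact b) * M2 ^ (k1 + k2) * chi ^ (2 * (a + b) - 4 - 3 * (k1 + k2))"
proof -
  have "(2 * a - 2 - 3 * k1) + (2 * b - 2 - 3 * k2) = 2 * (a + b) - 4 - 3 * (k1 + k2)"
    using three_mul_le_of_le_half_pred[OF assms(1,3)] three_mul_le_of_le_half_pred[OF assms(2,4)]
      assms(1,2) by simp
  then show ?thesis
    unfolding node_bound_def mult_power_combine by simp
qed

lemma chi_mult_moment_bound_mult:
  assumes "1 \<le> a" "1 \<le> b" "k1 \<le> a div 2" "k2 \<le> b div 2"
  shows "chi * (moment_bound a k1 * moment_bound b k2)
    = real (odd_dfact a * odd_dfact b) * M2 ^ (k1 + k2) * chi ^ (2 * (a + b) - 1 - 3 * (k1 + k2))"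
proof -
  have "chi * (moment_bound a k1 * moment_bound b k2)
      = real (odd_dfact a * odd_dfact b) * M2 ^ (k1 + k2) * chi ^ Suc (2 * (a + b) - 2 - 3 * (k1 + k2))"
    unfolding moment_bound_mult[OF assms] by (simp add: ac_simps)
  also have "Suc (2 * (a + b) - 2 - 3 * (k1 + k2)) = 2 * (a + b) - 1 - 3 * (k1 + k2)"
    using three_mul_le_of_le_half[OF assms(1,3)] three_mul_le_of_le_half[OF assms(2,4)] assms(1,2)
    by simp
  finally show ?thesis .
qed

lemma M2_mult_node_bound_mult:
  assumes "1 \<le> a" "1 \<le> b" "k1 \<le> (a - 1) div 2" "k2 \<le> (b - 1) div 2"
  shows "M2 * (node_bound a k1 * node_bound b k2)
    = real (odd_dfact a * odd_dfact b) * M2 ^ Suc (k1 + k2) * chi ^ (2 * (a + b) - 1 - 3 * Suc (k1 + k2))"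
proof -
  have "M2 * (node_bound a k1 * node_bound b k2)
      = real (odd_dfact a * odd_dfact b) * M2 ^ Suc (k1 + k2) * chi ^ (2 * (a + b) - 4 - 3 * (k1 + k2))"
    unfolding node_bound_mult[OF assms] by (simp add: ac_simps)
  also have "2 * (a + b) - 4 - 3 * (k1 + k2) = 2 * (a + b) - 1 - 3 * Suc (k1 + k2)"
    by simp
  finally show ?thesis .
qed

lemma sum_branching_event_le_via_path:
  assumes "finite I" "I1 \<in> splits I" "w \<in> X"
    and "\<And>u. u \<in> X \<Longrightarrow> moment u I1 \<le> B1" "\<And>u. u \<in> X \<Longrightarrow> moment u (I - I1) \<le> B2"
  shows "(\<Sum>Y\<in>PiE I (\<lambda>_. X). P (branching_event w Y I1 (I - I1))) \<le> chi * (B1 * B2)"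
proof -
  have "0 \<le> B1"
    using moment_nonneg[of w I1] assms(4)[OF assms(3)] by linarith
  have "(\<Sum>Y\<in>PiE I (\<lambda>_. X). P (branching_event w Y I1 (I - I1)))
      \<le> (\<Sum>u\<in>X. P (\<lambda>S. conn S w u) * (moment u I1 * moment u (I - I1)))"
    by (rule sum_branching_event_le_path[OF assms(1,2)])
  also have "\<dots> \<le> (\<Sum>u\<in>X. P (\<lambda>S. conn S w u) * (B1 * B2))"
    using \<open>0 \<le> B1\<close> assms(4,5)
    by (intro sum_mono mult_left_mono mult_mono P_nonneg moment_nonneg) auto
  also have "\<dots> = (\<Sum>u\<in>X. P (\<lambda>S. conn S w u)) * (B1 * B2)"
    by (simp add: sum_distrib_right)
  also have "\<dots> \<le> chi * (B1 * B2)"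
    using \<open>0 \<le> B1\<close> moment_nonneg[of w "I - I1"] assms(3) assms(5)[OF assms(3)]
    by (intro mult_right_mono sum_P_conn_le mult_nonneg_nonneg) auto
  finally show ?thesis .
qed

lemma sum_branching_event_le_via_pair:
  assumes "finite I" "I1 \<in> splits I" "w \<in> X"
    and "\<And>a. a \<in> X \<Longrightarrow> node_moment a I1 \<le> B1" "\<And>b. b \<in> X \<Longrightarrow> node_moment b (I - I1) \<le> B2"
  shows "(\<Sum>Y\<in>PiE I (\<lambda>_. X). P (branching_event w Y I1 (I - I1))) \<le> M2 * (B1 * B2)"
proof -
  have "0 \<le> B1" "0 \<le> B2"
    using node_moment_nonneg[of w I1] node_moment_nonneg[of w "I - I1"] assms(4)[OF assms(3)] assms(5)[OF assms(3)]
    by linarith+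
  have "(\<Sum>Y\<in>PiE I (\<lambda>_. X). P (branching_event w Y I1 (I - I1)))
      \<le> (\<Sum>a\<in>X. \<Sum>b\<in>X. P (conn_pair w a b) * (node_moment a I1 * node_moment b (I - I1)))"
    by (rule sum_branching_event_le_pair[OF assms(1,2)])
  also have "\<dots> \<le> (\<Sum>a\<in>X. \<Sum>b\<in>X. P (conn_pair w a b) * (B1 * B2))"
    using \<open>0 \<le> B1\<close> assms(4,5)
    by (intro sum_mono mult_left_mono mult_mono P_nonneg node_moment_nonneg) auto
  also have "\<dots> = (\<Sum>a\<in>X. \<Sum>b\<in>X. P (conn_pair w a b)) * (B1 * B2)"
    by (simp add: sum_distrib_right)
  also have "\<dots> \<le> M2 * (B1 * B2)"
    using \<open>0 \<le> B1\<close> \<open>0 \<le> B2\<close> assms(3)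
    by (intro mult_right_mono sum_P_conn_pair_le mult_nonneg_nonneg)
  finally show ?thesis .
qed

end

lemma half_sum_cases:
  "1 \<le> a \<Longrightarrow> 1 \<le> b \<Longrightarrow> k \<le> (a + b) div 2 \<Longrightarrow> \<not> k \<le> a div 2 + b div 2
    \<Longrightarrow> 1 \<le> k \<and> k - 1 \<le> (a - 1) div 2 + (b - 1) div (2::nat)"
  by (cases "even a"; cases "even b") (auto elim!: evenE oddE)

lemma half_pred_sum_le: "1 \<le> a \<Longrightarrow> 1 \<le> b \<Longrightarrow> (a + b - 1) div 2 \<le> a div 2 + b div (2::nat)"
  by (cases "even a"; cases "even b") (auto elim!: evenE oddE)

lemma splits_card:
  assumes "finite I" "I1 \<in> splits I"
  shows "1 \<le> card I1" "1 \<le> card (I - I1)" "card I = card I1 + card (I - I1)"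
proof -
  note split = splitsD[OF assms]
  have "finite I1"
    using finite_subset[OF split(1) assms(1)] .
  then show "1 \<le> card I1" "1 \<le> card (I - I1)"
    using split assms(1) by (auto simp: Suc_le_eq card_gt_0_iff)
  show "card I = card I1 + card (I - I1)"
    using split(4,5) by simp
qed

context finite_perc_bounds
begin

lemma sum_branching_event_le_split_bound:
  assumes I: "finite I" "I1 \<in> splits I" and k: "k \<le> card I div 2" and w: "w \<in> X"
    and moment_IH: "\<And>J k u. J \<subset> I \<Longrightarrow> J \<noteq> {} \<Longrightarrow> k \<le> card J div 2 \<Longrightarrow> u \<in> X
      \<Longrightarrow> moment u J \<le> moment_bound (card J) k"
    and node_IH: "\<And>J k u. J \<subset> I \<Longrightarrow> J \<noteq> {} \<Longrightarrow> k \<le> (card J - 1) div 2 \<Longrightarrow> u \<in> X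
      \<Longrightarrow> node_moment u J \<le> node_bound (card J) k"
  shows "(\<Sum>Y\<in>PiE I (\<lambda>_. X). P (branching_event w Y I1 (I - I1)))
    \<le> real (odd_dfact (card I1) * odd_dfact (card (I - I1))) * M2 ^ k * chi ^ (2 * card I - 1 - 3 * k)"
proof -
  note split = splitsD[OF I]
  define a b where "a = card I1" and "b = card (I - I1)"
  have parts: "I1 \<subset> I" "I1 \<noteq> {}" "I - I1 \<subset> I" "I - I1 \<noteq> {}"
    using split by auto
  have ab: "1 \<le> a" "1 \<le> b" "card I = a + b"
    using splits_card[OF I] unfolding a_def b_def by auto
  show ?thesis
  proof (cases "k \<le> a div 2 + b div 2")
    case True
    then obtain k1 k2 where k12: "k = k1 + k2" "k1 \<le> a div 2" "k2 \<le> b div 2"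
      using nat_le_add_split by blast
    have "(\<Sum>Y\<in>PiE I (\<lambda>_. X). P (branching_event w Y I1 (I - I1)))
        \<le> chi * (moment_bound a k1 * moment_bound b k2)"
      using parts k12 unfolding a_def b_def
      by (intro sum_branching_event_le_via_path[OF I w] moment_IH) auto
    also have "\<dots> = real (odd_dfact a * odd_dfact b) * M2 ^ k * chi ^ (2 * card I - 1 - 3 * k)"
      using chi_mult_moment_bound_mult[OF ab(1,2) k12(2,3)] k12(1) ab(3) by simp
    finally show ?thesis
      unfolding a_def b_def .
  next
    case False
    have "1 \<le> k" "k - 1 \<le> (a - 1) div 2 + (b - 1) div 2"
      using half_sum_cases[OF ab(1,2) _ False] k ab(3) by auto
    moreover obtain k1 k2 where "k - 1 = k1 + k2" "k1 \<le> (a - 1) div 2" "k2 \<le> (b - 1) div 2"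
      using nat_le_add_split[OF \<open>k - 1 \<le> _\<close>] by blast
    ultimately have k12: "k = Suc (k1 + k2)" "k1 \<le> (a - 1) div 2" "k2 \<le> (b - 1) div 2"
      by auto
    have "(\<Sum>Y\<in>PiE I (\<lambda>_. X). P (branching_event w Y I1 (I - I1)))
        \<le> M2 * (node_bound a k1 * node_bound b k2)"
      using parts k12 unfolding a_def b_def
      by (intro sum_branching_event_le_via_pair[OF I w] node_IH) auto
    also have "\<dots> = real (odd_dfact a * odd_dfact b) * M2 ^ k * chi ^ (2 * card I - 1 - 3 * k)"
      using M2_mult_node_bound_mult[OF ab(1,2) k12(2,3)] k12(1) ab(3) by simp
    finally show ?thesis
      unfolding a_def b_def .
  qed
qed

lemma moment_le_bound_step:
  assumes I: "finite I" "2 \<le> card I" and k: "k \<le> card I div 2" and w: "w \<in> X"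
    and moment_IH: "\<And>J k u. J \<subset> I \<Longrightarrow> J \<noteq> {} \<Longrightarrow> k \<le> card J div 2 \<Longrightarrow> u \<in> X
      \<Longrightarrow> moment u J \<le> moment_bound (card J) k"
    and node_IH: "\<And>J k u. J \<subset> I \<Longrightarrow> J \<noteq> {} \<Longrightarrow> k \<le> (card J - 1) div 2 \<Longrightarrow> u \<in> X
      \<Longrightarrow> node_moment u J \<le> node_bound (card J) k"
  shows "moment w I \<le> moment_bound (card I) k"
proof -
  have "moment w I \<le> (\<Sum>I1\<in>splits I. \<Sum>Y\<in>PiE I (\<lambda>_. X). P (branching_event w Y I1 (I - I1)))"
    by (rule moment_le_branching_sum[OF I w])
  also have "\<dots> \<le> (\<Sum>I1\<in>splits I. real (odd_dfact (card I1) * odd_dfact (card I - card I1))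
      * (M2 ^ k * chi ^ (2 * card I - 1 - 3 * k)))"
  proof (rule sum_mono)
    fix I1 assume I1: "I1 \<in> splits I"
    show "(\<Sum>Y\<in>PiE I (\<lambda>_. X). P (branching_event w Y I1 (I - I1)))
      \<le> real (odd_dfact (card I1) * odd_dfact (card I - card I1)) * (M2 ^ k * chi ^ (2 * card I - 1 - 3 * k))"
      using sum_branching_event_le_split_bound[OF I(1) I1 k w moment_IH node_IH] splitsD(5)[OF I(1) I1]
      by (simp add: mult.assoc)
  qed
  also have "\<dots> = moment_bound (card I) k"
    unfolding moment_bound_def sum_distrib_right[symmetric] sum_splits_odd_dfact[OF I(1) refl I(2)]
    by (simp add: mult.assoc)
  finally show ?thesis .
qed

lemma node_moment_le_bound_step:
  assumes I: "finite I" "2 \<le> card I" and k: "k \<le> (card I - 1) div 2" and w: "w \<in> X"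
    and moment_IH: "\<And>J k u. J \<subset> I \<Longrightarrow> J \<noteq> {} \<Longrightarrow> k \<le> card J div 2 \<Longrightarrow> u \<in> X
      \<Longrightarrow> moment u J \<le> moment_bound (card J) k"
  shows "node_moment w I \<le> node_bound (card I) k"
proof -
  have "node_moment w I = (\<Sum>I1\<in>splits I. moment w I1 * moment w (I - I1))"
    by (rule node_moment_eq_split[OF I])
  also have "\<dots> \<le> (\<Sum>I1\<in>splits I. real (odd_dfact (card I1) * odd_dfact (card I - card I1))
      * (M2 ^ k * chi ^ (2 * card I - 2 - 3 * k)))"
  proof (rule sum_mono)
    fix I1 assume I1: "I1 \<in> splits I"
    note split = splitsD[OF I(1) I1]
    define a b where "a = card I1" and "b = card (I - I1)"
    have ab: "1 \<le> a" "1 \<le> b" "card I = a + b"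
      using splits_card[OF I(1) I1] unfolding a_def b_def by auto
    then have "k \<le> a div 2 + b div 2"
      using k half_pred_sum_le[OF ab(1,2)] by linarith
    then obtain k1 k2 where k12: "k = k1 + k2" "k1 \<le> a div 2" "k2 \<le> b div 2"
      using nat_le_add_split by blast
    have "moment w I1 * moment w (I - I1) \<le> moment_bound a k1 * moment_bound b k2"
      using split k12 w unfolding a_def b_def
      by (intro mult_mono moment_IH moment_bound_nonneg moment_nonneg) auto
    also have "\<dots> = real (odd_dfact a * odd_dfact b) * (M2 ^ k * chi ^ (2 * card I - 2 - 3 * k))"
      using moment_bound_mult[OF ab(1,2) k12(2,3)] k12(1) ab(3) by (simp add: mult.assoc)
    finally show "moment w I1 * moment w (I - I1)
      \<le> real (odd_dfact (card I1) * odd_dfact (card I - card I1)) * (M2 ^ k * chi ^ (2 * card I - 2 - 3 * k))"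
      using ab(3) unfolding a_def b_def by simp
  qed
  also have "\<dots> = node_bound (card I) k"
    unfolding node_bound_def sum_distrib_right[symmetric] sum_splits_odd_dfact[OF I(1) refl I(2)]
    by (simp add: mult.assoc)
  finally show ?thesis .
qed

lemma moment_le_bound_and_node_moment_le_bound:
  assumes "finite I" "I \<noteq> {}"
  shows "(\<forall>k u. k \<le> card I div 2 \<longrightarrow> u \<in> X \<longrightarrow> moment u I \<le> moment_bound (card I) k)
    \<and> (\<forall>k u. k \<le> (card I - 1) div 2 \<longrightarrow> u \<in> X \<longrightarrow> node_moment u I \<le> node_bound (card I) k)"
  using assms
proof (induction I rule: finite_psubset_induct)
  case (psubset I)
  show ?case
  proof (cases "card I = 1")
    case True
    then obtain i where "I = {i}"
      by (meson card_1_singletonE)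
    then show ?thesis
      using True sum_P_conn_le
      by (auto simp: moment_singleton node_moment_singleton moment_bound_def node_bound_def odd_dfact_def)
  next
    case False
    have "card I \<noteq> 0"
      using psubset.hyps psubset.prems by simp
    with False have "2 \<le> card I"
      by linarith
    have moment_IH: "moment u J \<le> moment_bound (card J) k"
      if "J \<subset> I" "J \<noteq> {}" "k \<le> card J div 2" "u \<in> X" for J k u
      using psubset.IH[OF that(1,2)] that(3,4) by simp
    have node_IH: "node_moment u J \<le> node_bound (card J) k"
      if "J \<subset> I" "J \<noteq> {}" "k \<le> (card J - 1) div 2" "u \<in> X" for J k u
      using psubset.IH[OF that(1,2)] that(3,4) by simp
    show ?thesis
    proof (intro conjI allI impI)
      fix k u assume "k \<le> card I div 2" "u \<in> X"
      then show "moment u I \<le> moment_bound (card I) k"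
        by (rule moment_le_bound_step[OF psubset.hyps(1) \<open>2 \<le> card I\<close> _ _ moment_IH node_IH])
    next
      fix k u assume "k \<le> (card I - 1) div 2" "u \<in> X"
      then show "node_moment u I \<le> node_bound (card I) k"
        by (rule node_moment_le_bound_step[OF psubset.hyps(1) \<open>2 \<le> card I\<close> _ _ moment_IH])
    qed
  qed
qed

lemma expect_cluster_power_le:
  assumes "v \<in> X" "1 \<le> p" "k \<le> p div 2"
  shows "bern_expect q F (\<lambda>S. real (card ({x. conn S v x} \<inter> X)) ^ p)
    \<le> real (odd_dfact p) * M2 ^ k * chi ^ (2 * p - 1 - 3 * k)"
proof -
  have "{..<p} \<noteq> {}"
    using assms(2) by (simp add: lessThan_empty_iff)
  then have "moment v {..<p} \<le> moment_bound p k"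
    using moment_le_bound_and_node_moment_le_bound[of "{..<p}"] assms(1,3) by simp
  then show ?thesis
    using moment_eq_expect[of "{..<p}" v] unfolding moment_bound_def by simp
qed

end

section \<open>Percolation on the infinite graph\<close>

definition open_prob :: "real \<Rightarrow> ('v \<Rightarrow> 'v \<Rightarrow> real) \<Rightarrow> 'v set \<Rightarrow> real" where
  "open_prob \<beta> J e = 1 - exp (- \<beta> * edge_weight J e)"

definition edge_law :: "real \<Rightarrow> ('v \<Rightarrow> 'v \<Rightarrow> real) \<Rightarrow> 'v set \<Rightarrow> bool measure" where
  "edge_law \<beta> J e = measure_pmf (bernoulli_pmf (open_prob \<beta> J e))"

lemma perc_eq_PiM: "perc \<beta> J = PiM edges (edge_law \<beta> J)"
  unfolding perc_def edge_law_def open_prob_def by simp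

lemma prob_space_edge_law: "prob_space (edge_law \<beta> J e)"
  unfolding edge_law_def by (rule prob_space_measure_pmf)

lemma sets_edge_law [simp]: "sets (edge_law \<beta> J e) = UNIV"
  unfolding edge_law_def by simp

lemma edge_weight_pair:
  assumes "weighted_graph J" "x \<noteq> y"
  shows "edge_weight J {x, y} = J x y"
  unfolding edge_weight_def
proof (rule the_equality)
  show "\<exists>a b. a \<noteq> b \<and> {x, y} = {a, b} \<and> J x y = J a b"
    using assms(2) by blast
next
  fix w assume "\<exists>a b. a \<noteq> b \<and> {x, y} = {a, b} \<and> w = J a b"
  then obtain a b where ab: "{x, y} = {a, b}" "w = J a b"
    by blast
  then have "(x = a \<and> y = b) \<or> (x = b \<and> y = a)"
    by (metis doubleton_eq_iff)
  then show "w = J x y"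
    using ab assms(1) unfolding weighted_graph_def by auto
qed

lemma bern_params_open_prob:
  assumes "weighted_graph J" "0 \<le> \<beta>" "F \<subseteq> edges"
  shows "bern_params (open_prob \<beta> J) F"
  unfolding bern_params_def
proof
  fix e assume "e \<in> F"
  then obtain x y where "x \<noteq> y" "e = {x, y}"
    using assms(3) unfolding edges_def by blast
  then have "0 \<le> edge_weight J e"
    using edge_weight_pair[OF assms(1)] assms(1) unfolding weighted_graph_def by simp
  then have "0 \<le> \<beta> * edge_weight J e"
    using assms(2) by simp
  then show "0 \<le> open_prob \<beta> J e \<and> open_prob \<beta> J e \<le> 1"
    unfolding open_prob_def by simp
qed

definition cylinder ::
    "real \<Rightarrow> ('v \<Rightarrow> 'v \<Rightarrow> real) \<Rightarrow> 'v set set \<Rightarrow> 'v set set \<Rightarrow> ('v set \<Rightarrow> bool) set" where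
  "cylinder \<beta> J F S = prod_emb edges (edge_law \<beta> J) F (PiE F (\<lambda>e. {e \<in> S}))"

lemma cylinder_in_sets:
  assumes "finite F" "F \<subseteq> edges"
  shows "cylinder \<beta> J F S \<in> sets (perc \<beta> J)"
  unfolding cylinder_def perc_eq_PiM by (rule sets_PiM_I) (use assms in auto)

lemma mem_cylinder_iff:
  assumes "S \<subseteq> F" "\<omega> \<in> space (perc \<beta> J)"
  shows "\<omega> \<in> cylinder \<beta> J F S \<longleftrightarrow> {e\<in>F. \<omega> e} = S"
proof -
  have "\<omega> \<in> cylinder \<beta> J F S \<longleftrightarrow> (\<forall>e\<in>F. \<omega> e = (e \<in> S))"
    using assms(2) unfolding cylinder_def prod_emb_def perc_eq_PiM by (auto simp: PiE_iff space_PiM)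
  also have "\<dots> \<longleftrightarrow> {e\<in>F. \<omega> e} = S"
    using assms(1) by auto
  finally show ?thesis .
qed

lemma emeasure_cylinder:
  assumes "weighted_graph J" "0 \<le> \<beta>" "finite F" "F \<subseteq> edges" "S \<subseteq> F"
  shows "emeasure (perc \<beta> J) (cylinder \<beta> J F S) = ennreal (bern_weight (open_prob \<beta> J) F S)"
proof -
  let ?q = "open_prob \<beta> J"
  have q: "0 \<le> ?q e" "?q e \<le> 1" if "e \<in> F" for e
    using bern_params_open_prob[OF assms(1,2,4)] that unfolding bern_params_def by auto
  have "emeasure (perc \<beta> J) (cylinder \<beta> J F S) = (\<Prod>e\<in>F. emeasure (edge_law \<beta> J e) {e \<in> S})"
    unfolding cylinder_def perc_eq_PiM
    by (rule emeasure_PiM_emb) (use assms prob_space_edge_law in auto)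
  also have "\<dots> = (\<Prod>e\<in>F. ennreal (if e \<in> S then ?q e else 1 - ?q e))"
    using q by (intro prod.cong refl) (simp add: edge_law_def emeasure_pmf_single)
  also have "\<dots> = ennreal (\<Prod>e\<in>F. if e \<in> S then ?q e else 1 - ?q e)"
    using q by (intro prod_ennreal) auto
  also have "(\<Prod>e\<in>F. if e \<in> S then ?q e else 1 - ?q e) = bern_weight ?q F S"
    using assms(3,5) unfolding bern_weight_def by (simp add: prod.If_cases Diff_eq Int_absorb1)
  finally show ?thesis .
qed

lemma finite_config_fun_eq_sum:
  assumes "finite F" "\<omega> \<in> space (perc \<beta> J)"
  shows "ennreal (h {e\<in>F. \<omega> e}) = (\<Sum>S\<in>Pow F. ennreal (h S) * indicator (cylinder \<beta> J F S) \<omega>)"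
proof -
  have "(\<Sum>S\<in>Pow F. ennreal (h S) * indicator (cylinder \<beta> J F S) \<omega>)
      = (\<Sum>S\<in>Pow F. if S = {e\<in>F. \<omega> e} then ennreal (h S) else 0)"
    by (intro sum.cong refl) (auto simp: mem_cylinder_iff[OF _ assms(2)])
  also have "\<dots> = ennreal (h {e\<in>F. \<omega> e})"
    using assms(1) by (simp add: sum.delta')
  finally show ?thesis
    by simp
qed

lemma measurable_finite_config:
  assumes "finite F" "F \<subseteq> edges"
  shows "(\<lambda>\<omega>. ennreal (h {e\<in>F. \<omega> e})) \<in> borel_measurable (perc \<beta> J)"
proof -
  have "(\<lambda>\<omega>. \<Sum>S\<in>Pow F. ennreal (h S) * indicator (cylinder \<beta> J F S) \<omega>) \<in> borel_measurable (perc \<beta> J)"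
    using cylinder_in_sets[OF assms] by measurable
  then show ?thesis
    by (subst measurable_cong[OF finite_config_fun_eq_sum[OF assms(1)]])
qed

lemma nn_integral_finite_config:
  assumes "weighted_graph J" "0 \<le> \<beta>" "finite F" "F \<subseteq> edges" "\<And>S. 0 \<le> h S"
  shows "(\<integral>\<^sup>+ \<omega>. ennreal (h {e\<in>F. \<omega> e}) \<partial>perc \<beta> J) = ennreal (bern_expect (open_prob \<beta> J) F h)"
proof -
  have "(\<integral>\<^sup>+ \<omega>. ennreal (h {e\<in>F. \<omega> e}) \<partial>perc \<beta> J)
      = (\<integral>\<^sup>+ \<omega>. (\<Sum>S\<in>Pow F. ennreal (h S) * indicator (cylinder \<beta> J F S) \<omega>) \<partial>perc \<beta> J)"
    by (intro nn_integral_cong finite_config_fun_eq_sum[OF assms(3)])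
  also have "\<dots> = (\<Sum>S\<in>Pow F. \<integral>\<^sup>+ \<omega>. ennreal (h S) * indicator (cylinder \<beta> J F S) \<omega> \<partial>perc \<beta> J)"
    by (rule nn_integral_sum) (use cylinder_in_sets[OF assms(3,4)] in measurable)
  also have "\<dots> = (\<Sum>S\<in>Pow F. ennreal (h S) * ennreal (bern_weight (open_prob \<beta> J) F S))"
    by (intro sum.cong refl)
      (simp add: nn_integral_cmult_indicator cylinder_in_sets[OF assms(3,4)] emeasure_cylinder[OF assms(1-4)])
  also have "\<dots> = ennreal (\<Sum>S\<in>Pow F. bern_weight (open_prob \<beta> J) F S * h S)"
    using bern_weight_nonneg[OF bern_params_open_prob[OF assms(1,2,4)]] assms(5)
    by (subst sum_ennreal[symmetric]) (auto intro!: sum.cong simp: ennreal_mult'' mult.commute)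
  finally show ?thesis
    unfolding bern_expect_def .
qed

lemma finite_subset_incseq:
  fixes A :: "nat \<Rightarrow> 'a set"
  assumes mono: "\<And>n m. n \<le> m \<Longrightarrow> A n \<subseteq> A m" and cover: "\<And>x. x \<in> K \<Longrightarrow> \<exists>n. x \<in> A n"
    and "finite B" "B \<subseteq> K"
  shows "\<exists>N. B \<subseteq> A N"
  using assms(3,4)
proof (induction B rule: finite_induct)
  case (insert x B)
  then obtain N n where "B \<subseteq> A N" "x \<in> A n"
    using cover by blast
  then have "insert x B \<subseteq> A (max N n)"
    using mono[of N "max N n"] mono[of n "max N n"] by auto
  then show ?case ..
qed simp

lemma card_power_SUP:
  fixes A :: "nat \<Rightarrow> 'a set"
  assumes mono: "\<And>n m. n \<le> m \<Longrightarrow> A n \<subseteq> A m" and sub: "\<And>n. A n \<subseteq> K"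
    and fin: "\<And>n. finite (A n)" and cover: "\<And>x. x \<in> K \<Longrightarrow> \<exists>n. x \<in> A n" and p: "1 \<le> p"
  shows "(if finite K then ennreal (real (card K)) else \<infinity>) ^ p = (SUP n. ennreal (real (card (A n)) ^ p))"
proof (cases "finite K")
  case True
  obtain N where "K \<subseteq> A N"
    using finite_subset_incseq[OF mono cover True order_refl] by blast
  then have AN: "A N = K"
    using sub by auto
  have "ennreal (real (card (A n)) ^ p) \<le> ennreal (real (card K) ^ p)" for n
    using card_mono[OF True sub[of n]] by (simp add: power_mono)
  then have "(SUP n. ennreal (real (card (A n)) ^ p)) = ennreal (real (card K) ^ p)"
    using SUP_upper[of N UNIV "\<lambda>n. ennreal (real (card (A n)) ^ p)"] AN
    by (intro antisym SUP_least) auto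
  then show ?thesis
    using True by (simp add: ennreal_power)
next
  case False
  have sup: "(SUP n. ennreal (real (card (A n)) ^ p)) = \<top>"
  proof (rule ennreal_SUP_eq_top)
    fix m :: nat
    obtain B where B: "B \<subseteq> K" "finite B" "card B = m"
      using infinite_arbitrarily_large[OF False] by blast
    obtain N where "B \<subseteq> A N"
      using finite_subset_incseq[OF mono cover B(2,1)] by blast
    then have "m \<le> card (A N)"
      using card_mono[OF fin] B(3) by blast
    also have "\<dots> \<le> card (A N) ^ p"
      using p by (cases "card (A N)") (auto simp: self_le_power)
    finally have "of_nat m \<le> ennreal (real (card (A N)) ^ p)"
      by (simp flip: of_nat_power ennreal_of_nat_eq_real_of_nat)
    then show "\<exists>n\<in>UNIV. of_nat m \<le> ennreal (real (card (A n)) ^ p)"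
      by blast
  qed
  have "(if finite K then ennreal (real (card K)) else \<infinity>) ^ p = \<top>"
    using False p by (simp add: power_eq_top_ennreal)
  then show ?thesis
    unfolding sup .
qed

definition low_vertices :: "nat \<Rightarrow> 'v::countable set" where
  "low_vertices n = {x. to_nat x < n}"

definition low_edges :: "nat \<Rightarrow> 'v::countable set set" where
  "low_edges n = {e \<in> edges. e \<subseteq> low_vertices n}"

definition cluster_in :: "'v set set \<Rightarrow> ('v set \<Rightarrow> bool) \<Rightarrow> 'v \<Rightarrow> 'v set" where
  "cluster_in F \<omega> u = {x. conn {e\<in>F. \<omega> e} u x}"

lemma finite_low_vertices: "finite (low_vertices n)"
proof -
  have "low_vertices n \<subseteq> from_nat ` {..<n}"
  proof
    fix x assume "x \<in> low_vertices n"
    then show "x \<in> from_nat ` {..<n}"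
      unfolding low_vertices_def by (intro image_eqI[of _ _ "to_nat x"]) auto
  qed
  then show ?thesis
    by (rule finite_subset) simp
qed

lemma finite_low_edges: "finite (low_edges n)"
  unfolding low_edges_def by (rule finite_subset[of _ "Pow (low_vertices n)"]) (auto simp: finite_low_vertices)

lemma low_edges_subset_edges: "low_edges n \<subseteq> edges"
  unfolding low_edges_def by auto

lemma empty_notin_low_edges: "{} \<notin> low_edges n"
  unfolding low_edges_def edges_def by auto

lemma Union_low_edges: "\<Union>(low_edges n) \<subseteq> low_vertices n"
  unfolding low_edges_def by auto

lemma low_edges_mono: "n \<le> m \<Longrightarrow> low_edges n \<subseteq> low_edges m"
  unfolding low_edges_def low_vertices_def by auto

lemma conn_open_edges: "conn {e\<in>F. \<omega> e} a b \<Longrightarrow> (open_edge \<omega>)\<^sup>*\<^sup>* a b"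
proof (induction rule: rtranclp_induct)
  case (step y z)
  then have "open_edge \<omega> y z"
    unfolding cedge_def open_edge_def by auto
  with step show ?case
    by (meson rtranclp.rtrancl_into_rtrancl)
qed simp

lemma cluster_in_subset_cluster: "cluster_in F \<omega> u \<subseteq> cluster \<omega> u"
  unfolding cluster_in_def cluster_def by (auto intro: conn_open_edges)

lemma cluster_in_mono: "F \<subseteq> F' \<Longrightarrow> cluster_in F \<omega> u \<subseteq> cluster_in F' \<omega> u"
  unfolding cluster_in_def by (auto elim: conn_mono)

lemma finite_cluster_in_low_edges: "finite (cluster_in (low_edges n) \<omega> u)"
proof -
  have "cluster_in (low_edges n) \<omega> u \<subseteq> insert u (low_vertices n)"
    unfolding cluster_in_def using conn_in_Union Union_low_edges by fastforce
  then show ?thesis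
    using finite_low_vertices finite_subset by blast
qed

lemma cluster_in_low_edges_exhaust:
  assumes "(open_edge \<omega>)\<^sup>*\<^sup>* u x"
  shows "\<exists>n. x \<in> cluster_in (low_edges n) \<omega> u"
  using assms
proof (induction rule: rtranclp_induct)
  case base
  then show ?case
    unfolding cluster_in_def by auto
next
  case (step y z)
  then obtain n where n: "conn {e\<in>low_edges n. \<omega> e} u y"
    unfolding cluster_in_def by auto
  define n' where "n' = max n (Suc (max (to_nat y) (to_nat z)))"
  have yz: "y \<noteq> z" "\<omega> {y, z}"
    using step(2) unfolding open_edge_def by auto
  have "{y, z} \<in> low_edges n'"
    unfolding low_edges_def low_vertices_def edges_def n'_def using yz by auto
  then have "conn {e\<in>low_edges n'. \<omega> e} y z"
    using yz by (intro conn_edge) auto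
  moreover have "conn {e\<in>low_edges n'. \<omega> e} u y"
    using n low_edges_mono[of n n'] unfolding n'_def by (rule_tac conn_mono) auto
  ultimately show ?case
    unfolding cluster_in_def by (meson mem_Collect_eq rtranclp_trans)
qed

lemma cluster_size_power_SUP:
  assumes "1 \<le> p"
  shows "cluster_size \<omega> u ^ p = (SUP n. ennreal (real (card (cluster_in (low_edges n) \<omega> u)) ^ p))"
  unfolding cluster_size_def
proof (rule card_power_SUP[OF _ cluster_in_subset_cluster finite_cluster_in_low_edges _ assms])
  show "\<And>n m. n \<le> m \<Longrightarrow> cluster_in (low_edges n) \<omega> u \<subseteq> cluster_in (low_edges m) \<omega> u"
    by (intro cluster_in_mono low_edges_mono)
  show "\<And>x. x \<in> cluster \<omega> u \<Longrightarrow> \<exists>n. x \<in> cluster_in (low_edges n) \<omega> u"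
    unfolding cluster_def using cluster_in_low_edges_exhaust by blast
qed

lemma measurable_card_cluster_in_power:
  "(\<lambda>\<omega>. ennreal (real (card (cluster_in (low_edges n) \<omega> u)) ^ p)) \<in> borel_measurable (perc \<beta> J)"
  unfolding cluster_in_def
  by (rule measurable_finite_config[OF finite_low_edges low_edges_subset_edges,
        of "\<lambda>S. real (card {x. conn S u x}) ^ p"])

lemma measurable_cluster_size_power:
  fixes u :: "'v::countable"
  assumes "1 \<le> p"
  shows "(\<lambda>\<omega>. cluster_size \<omega> u ^ p) \<in> borel_measurable (perc \<beta> J)"
  unfolding cluster_size_power_SUP[OF assms]
  by (rule borel_measurable_SUP) (simp_all add: measurable_card_cluster_in_power)

lemma nn_integral_cluster_size_power_SUP:
  assumes "1 \<le> p"
  shows "(\<integral>\<^sup>+ \<omega>. cluster_size \<omega> u ^ p \<partial>perc \<beta> J)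
     = (SUP n. \<integral>\<^sup>+ \<omega>. ennreal (real (card (cluster_in (low_edges n) \<omega> u)) ^ p) \<partial>perc \<beta> J)"
proof -
  have "incseq (\<lambda>n \<omega>. ennreal (real (card (cluster_in (low_edges n) \<omega> u)) ^ p))"
    by (intro incseq_SucI le_funI ennreal_leI power_mono of_nat_mono card_mono
        finite_cluster_in_low_edges cluster_in_mono low_edges_mono) auto
  then show ?thesis
    unfolding cluster_size_power_SUP[OF assms]
    by (rule nn_integral_monotone_convergence_SUP[OF _ measurable_card_cluster_in_power])
qed

lemma card_cluster_in_le_cluster_size:
  "ennreal (real (card (cluster_in F \<omega> u \<inter> X)) ^ p) \<le> cluster_size \<omega> u ^ p"
proof (cases "finite (cluster \<omega> u)")
  case True
  have "card (cluster_in F \<omega> u \<inter> X) \<le> card (cluster \<omega> u)"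
    using cluster_in_subset_cluster[of F \<omega> u] True by (intro card_mono) auto
  then show ?thesis
    using True unfolding cluster_size_def by (simp add: ennreal_power[symmetric] power_mono)
next
  case False
  then show ?thesis
    unfolding cluster_size_def by (cases p) (simp_all add: power_eq_top_ennreal)
qed

lemma rtranclp_bij_iff:
  assumes bij: "bij \<phi>" and R: "\<And>a b. R a b \<longleftrightarrow> Q (\<phi> a) (\<phi> b)"
  shows "R\<^sup>*\<^sup>* a b \<longleftrightarrow> Q\<^sup>*\<^sup>* (\<phi> a) (\<phi> b)"
proof
  assume "R\<^sup>*\<^sup>* a b"
  then show "Q\<^sup>*\<^sup>* (\<phi> a) (\<phi> b)"
  proof (induction rule: rtranclp_induct)
    case (step y z)
    then show ?case
      using R by (meson rtranclp.rtrancl_into_rtrancl)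
  qed simp
next
  have inv: "\<phi> (inv \<phi> c) = c" "inv \<phi> (\<phi> a') = a'" for c a'
    using bij by (simp_all add: bij_def surj_f_inv_f inv_f_f)
  have "R\<^sup>*\<^sup>* a (inv \<phi> c)" if "Q\<^sup>*\<^sup>* (\<phi> a) c" for c
    using that
  proof (induction rule: rtranclp_induct)
    case base
    then show ?case
      by (simp add: inv)
  next
    case (step y z)
    have "R (inv \<phi> y) (inv \<phi> z)"
      using R step(2) by (simp add: inv)
    then show ?case
      using step(3) by (meson rtranclp.rtrancl_into_rtrancl)
  qed
  then show "Q\<^sup>*\<^sup>* (\<phi> a) (\<phi> b) \<Longrightarrow> R\<^sup>*\<^sup>* a b"
    using inv by metis
qed

lemma image_mem_edges:
  assumes "inj \<phi>" "e \<in> edges"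
  shows "\<phi> ` e \<in> edges"
proof -
  obtain x y where "x \<noteq> y" "e = {x, y}"
    using assms(2) unfolding edges_def by blast
  moreover have "\<phi> x \<noteq> \<phi> y"
    using assms(1) \<open>x \<noteq> y\<close> by (simp add: inj_eq)
  ultimately show ?thesis
    unfolding edges_def by auto
qed

lemma edge_law_image:
  assumes "weighted_graph J" "inj \<phi>" "\<And>a b. J (\<phi> a) (\<phi> b) = J a b" "e \<in> edges"
  shows "edge_law \<beta> J (\<phi> ` e) = edge_law \<beta> J e"
proof -
  obtain x y where xy: "x \<noteq> y" "e = {x, y}"
    using assms(4) unfolding edges_def by blast
  then have "\<phi> x \<noteq> \<phi> y"
    using assms(2) by (simp add: inj_eq)
  then have "edge_weight J (\<phi> ` e) = edge_weight J e"
    using edge_weight_pair[OF assms(1)] xy assms(3) by simp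
  then show ?thesis
    unfolding edge_law_def open_prob_def by simp
qed

lemma
  assumes "weighted_graph J" "bij \<phi>" "\<And>a b. J (\<phi> a) (\<phi> b) = J a b"
  shows measurable_relabel: "(\<lambda>\<omega>. \<lambda>e\<in>edges. \<omega> (\<phi> ` e)) \<in> measurable (perc \<beta> J) (perc \<beta> J)"
    and distr_relabel: "distr (perc \<beta> J) (perc \<beta> J) (\<lambda>\<omega>. \<lambda>e\<in>edges. \<omega> (\<phi> ` e)) = perc \<beta> J"
proof -
  have inj: "inj \<phi>"
    using assms(2) by (simp add: bij_def)
  have image: "(\<lambda>e. \<phi> ` e) \<in> edges \<rightarrow> edges"
    using image_mem_edges[OF inj] by blast
  have law: "PiM edges (\<lambda>e. edge_law \<beta> J (\<phi> ` e)) = perc \<beta> J"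
    unfolding perc_eq_PiM by (rule PiM_cong) (auto simp: edge_law_image[OF assms(1) inj assms(3)])
  have "(\<lambda>\<omega>. \<lambda>e\<in>edges. \<omega> (\<phi> ` e)) \<in> measurable (perc \<beta> J) (PiM edges (\<lambda>e. edge_law \<beta> J (\<phi> ` e)))"
  proof (rule measurable_restrict)
    fix e :: "'a set" assume "e \<in> edges"
    then show "(\<lambda>\<omega>. \<omega> (\<phi> ` e)) \<in> measurable (perc \<beta> J) (edge_law \<beta> J (\<phi> ` e))"
      unfolding perc_eq_PiM using image by (intro measurable_component_singleton) auto
  qed
  then show "(\<lambda>\<omega>. \<lambda>e\<in>edges. \<omega> (\<phi> ` e)) \<in> measurable (perc \<beta> J) (perc \<beta> J)"
    unfolding law .
  have "inj_on (\<lambda>e. \<phi> ` e) edges"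
    using inj by (simp add: inj_on_def inj_image_eq_iff)
  then show "distr (perc \<beta> J) (perc \<beta> J) (\<lambda>\<omega>. \<lambda>e\<in>edges. \<omega> (\<phi> ` e)) = perc \<beta> J"
    using distr_PiM_reindex[of edges "edge_law \<beta> J" "\<lambda>e. \<phi> ` e" edges] image
    unfolding law perc_eq_PiM[symmetric] by (simp add: prob_space_edge_law)
qed

lemma cluster_size_relabel:
  assumes "bij \<phi>"
  shows "cluster_size (\<lambda>e\<in>edges. \<omega> (\<phi> ` e)) u = cluster_size \<omega> (\<phi> u)"
proof -
  let ?\<omega>' = "\<lambda>e\<in>edges. \<omega> (\<phi> ` e)"
  have inj: "inj \<phi>"
    using assms by (simp add: bij_def)
  have "open_edge ?\<omega>' a b \<longleftrightarrow> open_edge \<omega> (\<phi> a) (\<phi> b)" for a b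
  proof (cases "a = b")
    case False
    then have "{a, b} \<in> edges" "\<phi> a \<noteq> \<phi> b"
      using inj unfolding edges_def by (auto simp: inj_eq)
    then show ?thesis
      unfolding open_edge_def using False by simp
  qed (simp add: open_edge_def)
  then have "x \<in> cluster ?\<omega>' u \<longleftrightarrow> \<phi> x \<in> cluster \<omega> (\<phi> u)" for x
    unfolding cluster_def using rtranclp_bij_iff[OF assms] by simp
  then have "cluster \<omega> (\<phi> u) = \<phi> ` cluster ?\<omega>' u"
    using assms by (auto simp: image_iff) (metis bij_pointE)
  moreover have "inj_on \<phi> (cluster ?\<omega>' u)"
    using inj by (rule inj_on_subset) simp
  ultimately show ?thesis
    unfolding cluster_size_def by (simp add: finite_image_iff card_image)
qed

lemma nn_integral_cluster_size_power_invariant: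
  fixes u v :: "'v::countable"
  assumes "weighted_graph J" "transitive_wgraph J" "1 \<le> j"
  shows "(\<integral>\<^sup>+ \<omega>. cluster_size \<omega> u ^ j \<partial>perc \<beta> J) = (\<integral>\<^sup>+ \<omega>. cluster_size \<omega> v ^ j \<partial>perc \<beta> J)"
proof -
  obtain \<phi> where \<phi>: "bij \<phi>" "\<And>a b. J (\<phi> a) (\<phi> b) = J a b" "\<phi> u = v"
    using assms(2) unfolding transitive_wgraph_def by blast
  let ?T = "\<lambda>\<omega>. \<lambda>e\<in>edges. \<omega> (\<phi> ` e)"
  have "(\<integral>\<^sup>+ \<omega>. cluster_size \<omega> u ^ j \<partial>perc \<beta> J)
      = (\<integral>\<^sup>+ \<omega>. cluster_size \<omega> u ^ j \<partial>distr (perc \<beta> J) (perc \<beta> J) ?T)"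
    by (simp only: distr_relabel[OF assms(1) \<phi>(1,2)])
  also have "\<dots> = (\<integral>\<^sup>+ \<omega>. cluster_size (?T \<omega>) u ^ j \<partial>perc \<beta> J)"
    by (rule nn_integral_distr[OF measurable_relabel[OF assms(1) \<phi>(1,2)]])
      (simp add: distr_relabel[OF assms(1) \<phi>(1,2)] measurable_cluster_size_power[OF assms(3)])
  also have "\<dots> = (\<integral>\<^sup>+ \<omega>. cluster_size \<omega> v ^ j \<partial>perc \<beta> J)"
    by (simp add: cluster_size_relabel[OF \<phi>(1)] \<phi>(3))
  finally show ?thesis .
qed

lemma expect_cluster_le_nn_integral:
  fixes u v :: "'v::countable"
  assumes "weighted_graph J" "transitive_wgraph J" "0 \<le> \<beta>" "1 \<le> j" "finite F" "F \<subseteq> edges"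
  shows "ennreal (bern_expect (open_prob \<beta> J) F (\<lambda>S. real (card ({x. conn S u x} \<inter> X)) ^ j))
    \<le> (\<integral>\<^sup>+ \<omega>. cluster_size \<omega> v ^ j \<partial>perc \<beta> J)"
proof -
  have "ennreal (bern_expect (open_prob \<beta> J) F (\<lambda>S. real (card ({x. conn S u x} \<inter> X)) ^ j))
      = (\<integral>\<^sup>+ \<omega>. ennreal (real (card (cluster_in F \<omega> u \<inter> X)) ^ j) \<partial>perc \<beta> J)"
    unfolding cluster_in_def by (rule nn_integral_finite_config[symmetric]) (use assms in auto)
  also have "\<dots> \<le> (\<integral>\<^sup>+ \<omega>. cluster_size \<omega> u ^ j \<partial>perc \<beta> J)"
    by (intro nn_integral_mono card_cluster_in_le_cluster_size)
  also have "\<dots> = (\<integral>\<^sup>+ \<omega>. cluster_size \<omega> v ^ j \<partial>perc \<beta> J)"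
    by (rule nn_integral_cluster_size_power_invariant[OF assms(1,2,4)])
  finally show ?thesis .
qed

lemma finite_perc_low_edges:
  assumes "weighted_graph J" "0 \<le> \<beta>"
  shows "finite_perc (open_prob \<beta> J) (low_edges n) (insert v (low_vertices n))"
proof
  show "bern_params (open_prob \<beta> J) (low_edges n)"
    by (rule bern_params_open_prob[OF assms low_edges_subset_edges])
  show "\<Union>(low_edges n) \<subseteq> insert v (low_vertices n)"
    using Union_low_edges by blast
qed (simp_all add: finite_low_edges empty_notin_low_edges finite_low_vertices)

text \<open>The maximal first and second moments over the finite volume play the roles of \<open>\<chi>\<close> and
  \<open>M2\<close>; by transitivity they are dominated by the infinite-volume moments at \<open>v\<close>.\<close>
lemma low_edges_moment_bounds:
  fixes v :: "'v::countable"
  assumes wg: "weighted_graph J" and tr: "transitive_wgraph J" and \<beta>: "0 \<le> \<beta>"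
  obtains chi M2
  where "finite_perc_bounds (open_prob \<beta> J) (low_edges n) (insert v (low_vertices n)) chi M2"
    and "ennreal chi \<le> (\<integral>\<^sup>+ \<omega>. cluster_size \<omega> v \<partial>perc \<beta> J)"
    and "ennreal M2 \<le> (\<integral>\<^sup>+ \<omega>. cluster_size \<omega> v ^ 2 \<partial>perc \<beta> J)"
proof -
  define q F X where "q = open_prob \<beta> J" and "F = (low_edges n :: 'v set set)"
    and "X = insert v (low_vertices n)"
  interpret finite_perc q F X
    unfolding q_def F_def X_def by (rule finite_perc_low_edges[OF wg \<beta>])
  define chi where "chi = (MAX u\<in>X. \<Sum>y\<in>X. P (\<lambda>S. conn S u y))"
  define M2 where "M2 = (MAX u\<in>X. \<Sum>a\<in>X. \<Sum>b\<in>X. P (conn_pair u a b))"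
  have X: "finite X" "X \<noteq> {}" "v \<in> X"
    unfolding X_def by (auto simp: finite_low_vertices)
  have chi_ge: "(\<Sum>y\<in>X. P (\<lambda>S. conn S u y)) \<le> chi"
    and M2_ge: "(\<Sum>a\<in>X. \<Sum>b\<in>X. P (conn_pair u a b)) \<le> M2" if "u \<in> X" for u
    unfolding chi_def M2_def using X(1) that by (auto intro: Max_ge)
  have "0 \<le> chi" "0 \<le> M2"
    using chi_ge[OF X(3)] M2_ge[OF X(3)] by (meson P_nonneg order_trans sum_nonneg)+
  then have bounds: "finite_perc_bounds q F X chi M2"
    by (intro finite_perc_bounds.intro finite_perc_axioms finite_perc_bounds_axioms.intro)
      (use chi_ge M2_ge in auto)
  have expect_le: "ennreal (bern_expect q F (\<lambda>S. real (card ({x. conn S u x} \<inter> X)) ^ j))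
      \<le> (\<integral>\<^sup>+ \<omega>. cluster_size \<omega> v ^ j \<partial>perc \<beta> J)" if "1 \<le> j" for u j
    unfolding q_def F_def
    by (rule expect_cluster_le_nn_integral[OF wg tr \<beta> that finite_low_edges low_edges_subset_edges])
  have "chi \<in> (\<lambda>u. \<Sum>y\<in>X. P (\<lambda>S. conn S u y)) ` X"
    and "M2 \<in> (\<lambda>u. \<Sum>a\<in>X. \<Sum>b\<in>X. P (conn_pair u a b)) ` X"
    unfolding chi_def M2_def using X(1,2) by (auto intro!: Max_in)
  then obtain u1 u2 where "chi = (\<Sum>y\<in>X. P (\<lambda>S. conn S u1 y))"
    and "M2 = (\<Sum>a\<in>X. \<Sum>b\<in>X. P (conn_pair u2 a b))"
    by blast
  then have "ennreal chi \<le> (\<integral>\<^sup>+ \<omega>. cluster_size \<omega> v \<partial>perc \<beta> J)"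
    and "ennreal M2 \<le> (\<integral>\<^sup>+ \<omega>. cluster_size \<omega> v ^ 2 \<partial>perc \<beta> J)"
    using expect_le[of 1 u1] expect_le[of 2 u2]
    by (simp_all add: sum_P_conn_eq_expect sum_P_conn_pair_eq_expect)
  with bounds show ?thesis
    unfolding q_def F_def X_def by (rule that)
qed

lemma nn_integral_card_cluster_in_le:
  fixes v :: "'v::countable"
  assumes wg: "weighted_graph J" and tr: "transitive_wgraph J" and \<beta>: "0 \<le> \<beta>"
    and p: "1 \<le> p" and k: "k \<le> p div 2"
  shows "(\<integral>\<^sup>+ \<omega>. ennreal (real (card (cluster_in (low_edges n) \<omega> v)) ^ p) \<partial>perc \<beta> J)
    \<le> ennreal (real (odd_dfact p)) * (\<integral>\<^sup>+ \<omega>. cluster_size \<omega> v ^ 2 \<partial>perc \<beta> J) ^ k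
       * (\<integral>\<^sup>+ \<omega>. cluster_size \<omega> v \<partial>perc \<beta> J) ^ (2 * p - 1 - 3 * k)"
proof -
  define q F X where "q = open_prob \<beta> J" and "F = (low_edges n :: 'v set set)"
    and "X = insert v (low_vertices n)"
  obtain chi M2 where bounds: "finite_perc_bounds q F X chi M2"
    and chi_le: "ennreal chi \<le> (\<integral>\<^sup>+ \<omega>. cluster_size \<omega> v \<partial>perc \<beta> J)"
    and M2_le: "ennreal M2 \<le> (\<integral>\<^sup>+ \<omega>. cluster_size \<omega> v ^ 2 \<partial>perc \<beta> J)"
    unfolding q_def F_def X_def by (rule low_edges_moment_bounds[OF wg tr \<beta>])
  interpret finite_perc_bounds q F X chi M2
    by (rule bounds)
  have "cluster_in F \<omega> v \<inter> X = cluster_in F \<omega> v" for \<omega>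
    using conn_in_X[of "{e\<in>F. \<omega> e}" v] unfolding cluster_in_def X_def by auto
  then have "(\<integral>\<^sup>+ \<omega>. ennreal (real (card (cluster_in (low_edges n) \<omega> v)) ^ p) \<partial>perc \<beta> J)
      = ennreal (bern_expect q F (\<lambda>S. real (card ({x. conn S v x} \<inter> X)) ^ p))"
    unfolding q_def F_def
    by (subst nn_integral_finite_config[symmetric, OF wg \<beta> finite_low_edges low_edges_subset_edges])
      (simp_all add: cluster_in_def F_def)
  also have "\<dots> \<le> ennreal (real (odd_dfact p) * M2 ^ k * chi ^ (2 * p - 1 - 3 * k))"
    by (intro ennreal_leI expect_cluster_power_le p k) (simp add: X_def)
  also have "\<dots> = ennreal (real (odd_dfact p)) * ennreal M2 ^ k * ennreal chi ^ (2 * p - 1 - 3 * k)"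
    using chi_nonneg M2_nonneg by (simp add: ennreal_mult ennreal_power)
  also have "\<dots> \<le> ennreal (real (odd_dfact p)) * (\<integral>\<^sup>+ \<omega>. cluster_size \<omega> v ^ 2 \<partial>perc \<beta> J) ^ k
       * (\<integral>\<^sup>+ \<omega>. cluster_size \<omega> v \<partial>perc \<beta> J) ^ (2 * p - 1 - 3 * k)"
    by (intro mult_mono power_mono chi_le M2_le) auto
  finally show ?thesis .
qed

lemma nat_ceiling_half_pred: "1 \<le> p \<Longrightarrow> nat \<lceil>real (p - 1) / 2\<rceil> = p div 2"
proof (cases "even p")
  case True
  assume "1 \<le> p"
  then obtain m where m: "p = 2 * m" "1 \<le> m"
    using True by (auto elim!: evenE)
  then have "\<lceil>real (p - 1) / 2\<rceil> = int m"
    unfolding ceiling_eq_iff by (auto simp: of_nat_diff)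
  then show ?thesis
    using m by simp
next
  case False
  then obtain m where m: "p = 2 * m + 1"
    by (auto elim!: oddE)
  then have "\<lceil>real (p - 1) / 2\<rceil> = int m"
    unfolding ceiling_eq_iff by auto
  then show ?thesis
    using m by simp
qed

theorem lemma4p16:
  fixes J :: "'v::countable \<Rightarrow> 'v \<Rightarrow> real" and \<beta> :: real and v :: 'v and p k :: nat
  assumes "weighted_graph J" and "transitive_wgraph J" and "\<beta> > 0"
    and "p \<ge> 2" and "k \<le> nat \<lceil>real (p - 1) / 2\<rceil>"
  shows "(\<integral>\<^sup>+ \<omega>. cluster_size \<omega> v ^ p \<partial>perc \<beta> J)
     \<le> ennreal (real (odd_dfact p))
        * (\<integral>\<^sup>+ \<omega>. cluster_size \<omega> v ^ 2 \<partial>perc \<beta> J) ^ k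
        * (\<integral>\<^sup>+ \<omega>. cluster_size \<omega> v \<partial>perc \<beta> J) ^ (2 * p - 1 - 3 * k)"
proof -
  have p: "1 \<le> p"
    using assms(4) by simp
  have k: "k \<le> p div 2"
    using assms(5) nat_ceiling_half_pred[OF p] by simp
  have "(\<integral>\<^sup>+ \<omega>. cluster_size \<omega> v ^ p \<partial>perc \<beta> J)
      = (SUP n. \<integral>\<^sup>+ \<omega>. ennreal (real (card (cluster_in (low_edges n) \<omega> v)) ^ p) \<partial>perc \<beta> J)"
    by (rule nn_integral_cluster_size_power_SUP[OF p])
  also have "\<dots> \<le> ennreal (real (odd_dfact p)) * (\<integral>\<^sup>+ \<omega>. cluster_size \<omega> v ^ 2 \<partial>perc \<beta> J) ^ k
        * (\<integral>\<^sup>+ \<omega>. cluster_size \<omega> v \<partial>perc \<beta> J) ^ (2 * p - 1 - 3 * k)"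
    using assms(1-3) by (intro SUP_least nn_integral_card_cluster_in_le p k) auto
  finally show ?thesis .
qed

end
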